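(* For any $\varepsilon,\delta\in(0,1)$ there is an $(\varepsilon,\delta)$-DP event-level continual mechanism in the exact setting that maintains the degree histogram on incremental edge streams of length $T$ over $n$-vertex graphs with additive error $\tilde O(\sqrt{n\log(1/\delta)}/\varepsilon)$ in $\ell_\infty$, i.e. with probability at least $2/3$, simultaneously for all time steps $t$ and all degrees $i$, the output estimate of $d_i(G^t)$ is within $\tilde O(\sqrt{n\log(1/\delta)}/\varepsilon)$ of $d_i(G^t)$.
   Context: Incremental edge streams: each update inserts an edge of a fixed $n$-vertex vertex set or is the empty element $\bot$; $G^t$ is the graph of edges inserted up to time $t$. The degree histogram is $(d_0,\dots,d_{n-1})$ with $d_i$ the number of vertices of degree $i$. A continual mechanism outputs after each update a value depending only on updates so far. Event-level neighboring streams differ in at most one time step; $(\varepsilon,\delta)$-DP means $\Pr[\mathcal A(u)\in S]\le e^\varepsilon\Pr[\mathcal A(v)\in S]+\delta$ for neighbors $u,v$ and all output sets $S$. $\tilde O$ hides polylogarithmic factors in $n$ and $T$. *)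

theory Defs
  imports "HOL-Probability.Probability"
begin

text \<open>Vertex set: {0..<n}. An edge is a two-element set {a,b} of vertices.
  An update is either Some e (insertion of edge e) or None (the empty element).\<close>

type_synonym update = "nat set option"

definition is_edge :: "nat \<Rightarrow> nat set \<Rightarrow> bool" where
  "is_edge n e \<longleftrightarrow> (\<exists>a b. a < n \<and> b < n \<and> a \<noteq> b \<and> e = {a, b})"

definition valid_update :: "nat \<Rightarrow> update \<Rightarrow> bool" where
  "valid_update n u \<longleftrightarrow> (case u of None \<Rightarrow> True | Some e \<Rightarrow> is_edge n e)"

definition valid_stream :: "nat \<Rightarrow> nat \<Rightarrow> update list \<Rightarrow> bool" where
  "valid_stream n T xs \<longleftrightarrow> length xs = T \<and> (\<forall>u\<in>set xs. valid_update n u)"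

definition graph_at :: "update list \<Rightarrow> nat \<Rightarrow> nat set set" where
  "graph_at xs t = {e. Some e \<in> set (take t xs)}"

definition degree :: "nat set set \<Rightarrow> nat \<Rightarrow> nat" where
  "degree G v = card {e \<in> G. v \<in> e}"

definition deg_hist :: "nat \<Rightarrow> nat set set \<Rightarrow> nat \<Rightarrow> nat" where
  "deg_hist n G i = card {v. v < n \<and> degree G v = i}"

definition neighboring :: "update list \<Rightarrow> update list \<Rightarrow> bool" where
  "neighboring xs ys \<longleftrightarrow> length xs = length ys \<and>
     (\<exists>k. \<forall>j < length xs. j \<noteq> k \<longrightarrow> xs ! j = ys ! j)"

text \<open>A continual mechanism is modelled by a source of internal randomness r drawn
  from a probability space R (on sequences of reals) and a map A such that the output
  after time step t is A r (take t xs): it depends only on the randomness and on the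
  updates so far.  Outputs are real vectors indexed by degree i.\<close>
definition mech_output ::
  "((nat \<Rightarrow> real) \<Rightarrow> update list \<Rightarrow> nat \<Rightarrow> real) \<Rightarrow> (nat \<Rightarrow> real) \<Rightarrow> update list \<Rightarrow> nat \<Rightarrow> nat \<Rightarrow> real" where
  "mech_output A r xs = (\<lambda>t. A r (take t xs))"

definition continual_mechanism ::
  "nat \<Rightarrow> nat \<Rightarrow> (nat \<Rightarrow> real) measure \<Rightarrow> ((nat \<Rightarrow> real) \<Rightarrow> update list \<Rightarrow> nat \<Rightarrow> real) \<Rightarrow> bool" where
  "continual_mechanism n T R A \<longleftrightarrow> prob_space R \<and>
     (\<forall>xs. valid_stream n T xs \<longrightarrow> (\<lambda>r. mech_output A r xs) \<in> R \<rightarrow>\<^sub>M borel)"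

definition event_level_DP ::
  "nat \<Rightarrow> nat \<Rightarrow> real \<Rightarrow> real \<Rightarrow> (nat \<Rightarrow> real) measure \<Rightarrow> ((nat \<Rightarrow> real) \<Rightarrow> update list \<Rightarrow> nat \<Rightarrow> real) \<Rightarrow> bool" where
  "event_level_DP n T \<epsilon> \<delta> R A \<longleftrightarrow>
     (\<forall>xs ys S. valid_stream n T xs \<longrightarrow> valid_stream n T ys \<longrightarrow> neighboring xs ys \<longrightarrow>
        S \<in> sets (borel :: (nat \<Rightarrow> nat \<Rightarrow> real) measure) \<longrightarrow>
        measure R {r \<in> space R. mech_output A r xs \<in> S}
          \<le> exp \<epsilon> * measure R {r \<in> space R. mech_output A r ys \<in> S} + \<delta>)"

definition accurate ::
  "nat \<Rightarrow> nat \<Rightarrow> (nat \<Rightarrow> real) measure \<Rightarrow> ((nat \<Rightarrow> real) \<Rightarrow> update list \<Rightarrow> nat \<Rightarrow> real) \<Rightarrow> real \<Rightarrow> bool" where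
  "accurate n T R A \<alpha> \<longleftrightarrow>
     (\<forall>xs. valid_stream n T xs \<longrightarrow>
        measure R {r \<in> space R. \<forall>t\<in>{1..T}. \<forall>i<n.
            \<bar>A r (take t xs) i - real (deg_hist n (graph_at xs t) i)\<bar> \<le> \<alpha>} \<ge> 2/3)"

end

theory Submission
  imports Defs
begin

text \<open>The mechanism is the binary tree mechanism applied to the degree histogram. For every
  dyadic block of time steps and every degree i, the change of d_i over the block is released
  with independent (truncated) discrete Laplace noise of scale 1/c; the histogram at time t is
  the sum of the at most log T blocks in the binary expansion of t, so a union bound over the
  O(n T log T) nodes gives error O(log T log(nT) / c) with probability 2/3.

  Neighbouring streams differ in one update, which touches at most four vertices. The degree
  of each of them grows monotonically from 0 to at most n, so on every level of the tree the
  block increments of the two streams differ by O(n) in total and by at most 8 in each entry: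
  the shift has squared l2-norm O(n log T). For product Laplace noise the privacy loss of such
  a shift has mean O(c^2 n log T) and, by Hoeffding's inequality, deviations of order
  c sqrt(n log T log(1/\<delta>)). Taking c of order \<epsilon> / sqrt(n log T log(1/\<delta>)) yields
  (\<epsilon>, \<delta>)-privacy and the error bound.\<close>

section \<open>Degrees in edge streams\<close>

fun update_vertices :: "update \<Rightarrow> nat set" where
  "update_vertices None = {}"
| "update_vertices (Some e) = e"

definition degree_at :: "update list \<Rightarrow> nat \<Rightarrow> nat \<Rightarrow> nat" where
  "degree_at xs t v = degree (graph_at xs t) v"

lemma finite_graph_at: "finite (graph_at xs t)"
proof -
  have "graph_at xs t = Some -` set (take t xs)"
    by (auto simp: graph_at_def)
  then show ?thesis
    by (simp add: finite_vimageI)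
qed

lemma graph_at_0 [simp]: "graph_at xs 0 = {}"
  by (simp add: graph_at_def)

lemma graph_at_mono:
  assumes "s \<le> t"
  shows "graph_at xs s \<subseteq> graph_at xs t"
  using set_take_subset_set_take[OF assms, of xs] unfolding graph_at_def by blast

lemma graph_at_take: "s \<le> t \<Longrightarrow> graph_at (take t xs) s = graph_at xs s"
  by (simp add: graph_at_def min_absorb1)

lemma degree_at_mono:
  assumes "s \<le> t"
  shows "degree_at xs s v \<le> degree_at xs t v"
  unfolding degree_at_def degree_def
  using graph_at_mono[OF assms, of xs] by (intro card_mono) (auto simp: finite_graph_at)

lemma is_edge_graph_at:
  assumes "valid_stream n T xs" "e \<in> graph_at xs t"
  shows "is_edge n e"
proof -
  have "Some e \<in> set xs"
    using assms(2) in_set_takeD unfolding graph_at_def by fastforce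
  then show ?thesis
    using assms(1) by (force simp: valid_stream_def valid_update_def)
qed

lemma degree_at_le:
  assumes "valid_stream n T xs"
  shows "degree_at xs t v \<le> n"
proof -
  have "{e \<in> graph_at xs t. v \<in> e} \<subseteq> (\<lambda>u. {v, u}) ` {..<n}"
  proof
    fix e assume e: "e \<in> {e \<in> graph_at xs t. v \<in> e}"
    then obtain a b where ab: "a < n" "b < n" "e = {a, b}"
      using e is_edge_graph_at[OF assms] unfolding is_edge_def by blast
    then have "e = {v, b} \<or> e = {v, a}"
      using e by auto
    then show "e \<in> (\<lambda>u. {v, u}) ` {..<n}"
      using ab by blast
  qed
  then have "degree_at xs t v \<le> card ((\<lambda>u. {v, u}) ` {..<n})"
    unfolding degree_at_def degree_def by (intro card_mono) auto
  also have "\<dots> \<le> n"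
    using card_image_le[of "{..<n}" "\<lambda>u. {v, u}"] by simp
  finally show ?thesis .
qed

lemma deg_hist_eq_sum: "int (deg_hist n G i) = (\<Sum>v<n. if degree G v = i then 1 else 0)"
proof -
  have "int (deg_hist n G i) = (\<Sum>v\<in>{v \<in> {..<n}. degree G v = i}. 1)"
    by (simp add: deg_hist_def)
  also have "\<dots> = (\<Sum>v<n. if degree G v = i then 1 else 0)"
    by (subst sum.inter_filter) auto
  finally show ?thesis .
qed

lemma incident_edges_graph_at_subset:
  assumes len: "length xs = length ys"
    and same: "\<forall>j < length xs. j \<noteq> k \<longrightarrow> xs ! j = ys ! j"
    and v: "k < length xs \<Longrightarrow> v \<notin> update_vertices (xs ! k)"
  shows "{e \<in> graph_at xs t. v \<in> e} \<subseteq> {e \<in> graph_at ys t. v \<in> e}"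
proof safe
  fix e assume "e \<in> graph_at xs t" and ve: "v \<in> e"
  then obtain j where j: "j < length xs" "j < t" "xs ! j = Some e"
    by (auto simp: graph_at_def in_set_conv_nth)
  have "j \<noteq> k"
    using v j(1,3) ve by auto
  then have "take t ys ! j = Some e" "j < length (take t ys)"
    using j same len by auto
  then have "Some e \<in> set (take t ys)"
    by (metis nth_mem)
  then show "e \<in> graph_at ys t"
    by (simp add: graph_at_def)
qed

lemma card_update_vertices:
  assumes "valid_update n u"
  shows "finite (update_vertices u) \<and> card (update_vertices u) \<le> 2"
  using assms by (cases u) (auto simp: valid_update_def is_edge_def card_insert_if)

lemma neighboring_degree_at_eq_outside:
  assumes xs: "valid_stream n T xs" and ys: "valid_stream n T ys" and "neighboring xs ys"
  obtains A where "finite A" "card A \<le> 4" "\<And>v t. v \<notin> A \<Longrightarrow> degree_at xs t v = degree_at ys t v"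
proof -
  obtain k where same: "\<forall>j < length xs. j \<noteq> k \<longrightarrow> xs ! j = ys ! j" and len: "length xs = length ys"
    using assms(3) by (auto simp: neighboring_def)
  define A where "A = (if k < length xs then update_vertices (xs ! k) \<union> update_vertices (ys ! k) else {})"
  have fin: "finite A \<and> card A \<le> 4"
  proof (cases "k < length xs")
    case True
    have "valid_update n (xs ! k)" "valid_update n (ys ! k)"
      using xs ys True len by (auto simp: valid_stream_def)
    then have "finite (update_vertices (xs ! k))" "card (update_vertices (xs ! k)) \<le> 2"
      "finite (update_vertices (ys ! k))" "card (update_vertices (ys ! k)) \<le> 2"
      using card_update_vertices by blast+
    then show ?thesis
      using True card_Un_le[of "update_vertices (xs ! k)" "update_vertices (ys ! k)"]
      by (simp add: A_def)
  qed (simp add: A_def)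
  have eq: "degree_at xs t v = degree_at ys t v" if "v \<notin> A" for v t
  proof -
    have vx: "k < length xs \<Longrightarrow> v \<notin> update_vertices (xs ! k)"
      and vy: "k < length ys \<Longrightarrow> v \<notin> update_vertices (ys ! k)"
      using that len by (simp_all add: A_def)
    have same': "\<forall>j < length ys. j \<noteq> k \<longrightarrow> ys ! j = xs ! j"
      using same len by simp
    have "{e \<in> graph_at xs t. v \<in> e} = {e \<in> graph_at ys t. v \<in> e}"
      using incident_edges_graph_at_subset[OF len same vx] incident_edges_graph_at_subset[OF len[symmetric] same' vy]
      by (rule subset_antisym)
    then show ?thesis
      by (simp add: degree_at_def degree_def)
  qed
  show ?thesis
    using that[of A] fin eq by simp
qed

section \<open>Truncated discrete Laplace noise\<close>

definition trunc_dlaplace_norm :: "real \<Rightarrow> nat \<Rightarrow> real" where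
  "trunc_dlaplace_norm c N = (\<Sum>y\<in>{-int N..int N}. exp (-c * \<bar>real_of_int y\<bar>))"

definition trunc_dlaplace_density :: "real \<Rightarrow> nat \<Rightarrow> int \<Rightarrow> real" where
  "trunc_dlaplace_density c N z =
     (if \<bar>z\<bar> \<le> int N then exp (-c * \<bar>real_of_int z\<bar>) / trunc_dlaplace_norm c N else 0)"

text \<open>Truncating to [-N, N] keeps all noise distributions finite, at the price of an
  additional failure probability in the privacy analysis.\<close>
definition trunc_dlaplace :: "real \<Rightarrow> nat \<Rightarrow> int pmf" where
  "trunc_dlaplace c N = embed_pmf (trunc_dlaplace_density c N)"

lemma trunc_dlaplace_norm_ge_1: "trunc_dlaplace_norm c N \<ge> 1"
proof -
  have "(\<Sum>y\<in>{0::int}. exp (-c * \<bar>real_of_int y\<bar>)) \<le> trunc_dlaplace_norm c N"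
    unfolding trunc_dlaplace_norm_def by (intro sum_mono2) auto
  then show ?thesis
    by simp
qed

lemma trunc_dlaplace_density_nonneg: "trunc_dlaplace_density c N z \<ge> 0"
  using trunc_dlaplace_norm_ge_1[of c N] by (simp add: trunc_dlaplace_density_def)

lemma trunc_dlaplace_density_uminus:
  "trunc_dlaplace_density c N (- z) = trunc_dlaplace_density c N z"
  by (simp add: trunc_dlaplace_density_def)

lemma sum_trunc_dlaplace_density: "(\<Sum>z\<in>{-int N..int N}. trunc_dlaplace_density c N z) = 1"
proof -
  have "(\<Sum>z\<in>{-int N..int N}. trunc_dlaplace_density c N z)
      = (\<Sum>z\<in>{-int N..int N}. exp (-c * \<bar>real_of_int z\<bar>) / trunc_dlaplace_norm c N)"
    by (intro sum.cong) (auto simp: trunc_dlaplace_density_def)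
  then show ?thesis
    using trunc_dlaplace_norm_ge_1[of c N] by (simp add: trunc_dlaplace_norm_def flip: sum_divide_distrib)
qed

lemma pmf_trunc_dlaplace: "pmf (trunc_dlaplace c N) z = trunc_dlaplace_density c N z"
  unfolding trunc_dlaplace_def
proof (rule pmf_embed_pmf)
  have "(\<integral>\<^sup>+ z. ennreal (trunc_dlaplace_density c N z) \<partial>count_space UNIV)
      = (\<Sum>z\<in>{-int N..int N}. ennreal (trunc_dlaplace_density c N z))"
    by (rule nn_integral_count_space') (auto simp: trunc_dlaplace_density_def)
  also have "\<dots> = 1"
    by (simp add: sum_ennreal trunc_dlaplace_density_nonneg sum_trunc_dlaplace_density)
  finally show "(\<integral>\<^sup>+ z. ennreal (trunc_dlaplace_density c N z) \<partial>count_space UNIV) = 1" .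
qed (rule trunc_dlaplace_density_nonneg)

lemma set_pmf_trunc_dlaplace: "set_pmf (trunc_dlaplace c N) \<subseteq> {-int N..int N}"
  by (auto simp: set_pmf_eq pmf_trunc_dlaplace trunc_dlaplace_density_def)

lemma measure_trunc_dlaplace:
  "measure (trunc_dlaplace c N) A = (\<Sum>z\<in>A \<inter> {-int N..int N}. trunc_dlaplace_density c N z)"
proof -
  have "A \<inter> {-int N..int N} \<inter> set_pmf (trunc_dlaplace c N) = A \<inter> set_pmf (trunc_dlaplace c N)"
    using set_pmf_trunc_dlaplace[of c N] by blast
  then have "measure (trunc_dlaplace c N) A = measure (trunc_dlaplace c N) (A \<inter> {-int N..int N})"
    by (metis measure_Int_set_pmf)
  also have "\<dots> = (\<Sum>z\<in>A \<inter> {-int N..int N}. trunc_dlaplace_density c N z)"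
    by (subst measure_measure_pmf_finite) (auto simp: pmf_trunc_dlaplace)
  finally show ?thesis .
qed

lemma sum_exp_neg_abs_le_trunc_dlaplace_norm:
  assumes "inj_on h A" "h ` A \<subseteq> {-int N..int N}"
  shows "(\<Sum>z\<in>A. exp (-c * \<bar>real_of_int (h z)\<bar>)) \<le> trunc_dlaplace_norm c N"
proof -
  have "(\<Sum>z\<in>A. exp (-c * \<bar>real_of_int (h z)\<bar>)) = (\<Sum>y\<in>h ` A. exp (-c * \<bar>real_of_int y\<bar>))"
    using assms(1) by (simp add: sum.reindex)
  also have "\<dots> \<le> trunc_dlaplace_norm c N"
    unfolding trunc_dlaplace_norm_def by (intro sum_mono2 assms(2)) auto
  finally show ?thesis .
qed

lemma trunc_dlaplace_upper_tail:
  assumes "c \<ge> 0"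
  shows "(\<Sum>z\<in>{int k..int N}. trunc_dlaplace_density c N z) \<le> exp (-c * k)"
proof -
  let ?Z = "trunc_dlaplace_norm c N"
  have "(\<Sum>z\<in>{int k..int N}. trunc_dlaplace_density c N z)
      = exp (-c * k) * (\<Sum>z\<in>{int k..int N}. exp (-c * \<bar>real_of_int (z - int k)\<bar>)) / ?Z"
  proof -
    have "trunc_dlaplace_density c N z = exp (-c * k) * exp (-c * \<bar>real_of_int (z - int k)\<bar>) / ?Z"
      if "z \<in> {int k..int N}" for z
    proof -
      have "\<bar>real_of_int z\<bar> = real k + \<bar>real_of_int (z - int k)\<bar>"
        using that by auto
      then show ?thesis
        using that by (simp add: trunc_dlaplace_density_def algebra_simps flip: exp_add)
    qed
    then show ?thesis
      by (simp add: sum_distrib_left sum_divide_distrib)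
  qed
  also have "(\<Sum>z\<in>{int k..int N}. exp (-c * \<bar>real_of_int (z - int k)\<bar>)) \<le> ?Z"
    by (rule sum_exp_neg_abs_le_trunc_dlaplace_norm) (auto simp: inj_on_def)
  finally show ?thesis
    using trunc_dlaplace_norm_ge_1[of c N] by (simp add: divide_le_eq)
qed

lemma trunc_dlaplace_lower_tail:
  assumes "c \<ge> 0"
  shows "(\<Sum>z\<in>{-int N..-int k}. trunc_dlaplace_density c N z) \<le> exp (-c * k)"
proof -
  have "(\<Sum>z\<in>{-int N..-int k}. trunc_dlaplace_density c N z)
      = (\<Sum>z\<in>uminus ` {int k..int N}. trunc_dlaplace_density c N z)"
    by (intro sum.cong refl) (auto simp: image_iff intro!: bexI[of _ "- x" for x])
  also have "\<dots> = (\<Sum>z\<in>{int k..int N}. trunc_dlaplace_density c N z)"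
    by (subst sum.reindex) (auto simp: inj_on_def trunc_dlaplace_density_uminus)
  finally show ?thesis
    using trunc_dlaplace_upper_tail[OF assms] by simp
qed

lemma trunc_dlaplace_tail:
  assumes "c \<ge> 0"
  shows "measure (trunc_dlaplace c N) {z. \<bar>z\<bar> \<ge> int k} \<le> 2 * exp (-c * k)"
proof -
  let ?g = "trunc_dlaplace_density c N"
  have "measure (trunc_dlaplace c N) {z. \<bar>z\<bar> \<ge> int k} = (\<Sum>z\<in>{z. \<bar>z\<bar> \<ge> int k} \<inter> {-int N..int N}. ?g z)"
    by (rule measure_trunc_dlaplace)
  also have "\<dots> \<le> (\<Sum>z\<in>{int k..int N} \<union> {-int N..-int k}. ?g z)"
    by (intro sum_mono2) (auto simp: trunc_dlaplace_density_nonneg)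
  also have "\<dots> \<le> (\<Sum>z\<in>{int k..int N}. ?g z) + (\<Sum>z\<in>{-int N..-int k}. ?g z)"
    by (subst sum_Un) (auto intro!: sum_nonneg simp: trunc_dlaplace_density_nonneg)
  finally show ?thesis
    using trunc_dlaplace_upper_tail[OF assms, of N k] trunc_dlaplace_lower_tail[OF assms, of N k]
    by linarith
qed

lemma trunc_dlaplace_tail_real:
  assumes "c \<ge> 0" "a \<ge> 0"
  shows "measure (trunc_dlaplace c N) {z. \<bar>real_of_int z\<bar> > a} \<le> 2 * exp (-c * a)"
proof -
  define k where "k = nat \<lfloor>a\<rfloor> + 1"
  have "a \<le> real k"
    using assms(2) by (simp add: k_def) linarith
  have "measure (trunc_dlaplace c N) {z. \<bar>real_of_int z\<bar> > a}
      \<le> measure (trunc_dlaplace c N) {z. \<bar>z\<bar> \<ge> int k}"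
    using assms(2) by (intro measure_pmf.finite_measure_mono) (auto simp: k_def, linarith)
  also have "\<dots> \<le> 2 * exp (-c * k)"
    by (rule trunc_dlaplace_tail[OF assms(1)])
  also have "\<dots> \<le> 2 * exp (-c * a)"
    using \<open>a \<le> real k\<close> assms(1) by (simp add: mult_left_mono)
  finally show ?thesis .
qed

definition laplace_loss :: "real \<Rightarrow> int \<Rightarrow> int \<Rightarrow> real" where
  "laplace_loss c w z = c * (\<bar>real_of_int (z + w)\<bar> - \<bar>real_of_int z\<bar>)"

lemma abs_laplace_loss_le:
  assumes "c \<ge> 0"
  shows "\<bar>laplace_loss c w z\<bar> \<le> c * \<bar>real_of_int w\<bar>"
proof -
  have "\<bar>\<bar>real_of_int (z + w)\<bar> - \<bar>real_of_int z\<bar>\<bar> \<le> \<bar>real_of_int w\<bar>"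
    by simp
  then show ?thesis
    using assms by (simp add: laplace_loss_def abs_mult mult_left_mono)
qed

lemma trunc_dlaplace_density_shift:
  assumes "\<bar>z\<bar> \<le> int N" "\<bar>z + w\<bar> \<le> int N"
  shows "trunc_dlaplace_density c N z
    = trunc_dlaplace_density c N (z + w) * exp (laplace_loss c w z)"
  using assms
  by (simp add: trunc_dlaplace_density_def laplace_loss_def flip: exp_add) (simp add: algebra_simps)

lemma trunc_dlaplace_density_shift_le:
  assumes "\<bar>z\<bar> \<le> int N"
  shows "trunc_dlaplace_density c N (z + w) \<le> trunc_dlaplace_density c N z * exp (- laplace_loss c w z)"
proof (cases "\<bar>z + w\<bar> \<le> int N")
  case True
  then show ?thesis
    using trunc_dlaplace_density_shift[OF assms True, of c] by (simp add: exp_minus_inverse mult.assoc)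
next
  case False
  then have "trunc_dlaplace_density c N (z + w) = 0"
    by (simp add: trunc_dlaplace_density_def)
  then show ?thesis
    by (simp add: trunc_dlaplace_density_nonneg)
qed

lemma sum_trunc_dlaplace_density_shift_ge:
  assumes "c \<ge> 0" "nat \<bar>w\<bar> \<le> N"
  shows "1 - 2 * exp (-c * real (N - nat \<bar>w\<bar> + 1))
    \<le> (\<Sum>z\<in>{-int N..int N}. trunc_dlaplace_density c N (z + w))"
proof -
  let ?g = "trunc_dlaplace_density c N" and ?S = "{-int N..int N}"
  define Tl where "Tl = {y. \<bar>y\<bar> \<ge> int (N - nat \<bar>w\<bar> + 1)}"
  have "1 - measure (trunc_dlaplace c N) Tl = (\<Sum>y\<in>?S - Tl \<inter> ?S. ?g y)"
    by (simp add: sum_diff measure_trunc_dlaplace sum_trunc_dlaplace_density Int_commute)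
  also have "\<dots> \<le> (\<Sum>y\<in>(\<lambda>z. z + w) ` ?S. ?g y)"
    using assms(2)
    by (intro sum_mono2)
      (auto simp: Tl_def trunc_dlaplace_density_nonneg image_iff intro!: bexI[of _ "x - w" for x])
  also have "\<dots> = (\<Sum>z\<in>?S. ?g (z + w))"
    by (subst sum.reindex) (auto simp: inj_on_def)
  finally show ?thesis
    using trunc_dlaplace_tail[OF assms(1), of N "N - nat \<bar>w\<bar> + 1"] by (simp add: Tl_def)
qed

lemma le_one_minus_exp_neg_add_square:
  fixes x :: real
  assumes "\<bar>x\<bar> \<le> 1"
  shows "x \<le> 1 - exp (-x) + x^2"
proof (cases "x \<le> 0")
  case True
  then show ?thesis
    using assms by (smt (verit) exp_bound power2_minus)
next
  case False
  have "exp (-x) = 1 / exp x"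
    by (simp add: exp_minus field_simps)
  also have "\<dots> \<le> 1 / (1 + x)"
    using exp_ge_add_one_self[of x] False by (intro divide_left_mono) auto
  also have "\<dots> \<le> 1 - x + x^2"
  proof -
    have "(1 + x) * (1 - x + x^2) = 1 + x^3"
      by (simp add: algebra_simps power2_eq_square power3_eq_cube)
    then show ?thesis
      using False by (simp add: divide_simps mult.commute)
  qed
  finally show ?thesis
    by simp
qed

text \<open>The expected privacy loss of a single coordinate is only quadratic in the shift:
  since the density ratio has mean at most one, the linear term cancels up to the mass lost
  to the truncation.\<close>
lemma trunc_dlaplace_expected_loss:
  assumes c: "c \<ge> 0" and cw: "c * \<bar>real_of_int w\<bar> \<le> 1" and wN: "nat \<bar>w\<bar> \<le> N"
  shows "measure_pmf.expectation (trunc_dlaplace c N) (laplace_loss c w)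
    \<le> 2 * exp (-c * real (N - nat \<bar>w\<bar> + 1)) + c^2 * (real_of_int w)^2"
proof -
  let ?g = "trunc_dlaplace_density c N" and ?S = "{-int N..int N}" and ?X = "laplace_loss c w"
  let ?q = "c^2 * (real_of_int w)^2"
  have pointwise: "?X z \<le> 1 - exp (- ?X z) + ?q" for z
  proof -
    have X: "\<bar>?X z\<bar> \<le> c * \<bar>real_of_int w\<bar>"
      by (rule abs_laplace_loss_le[OF c])
    then have "\<bar>?X z\<bar>^2 \<le> (c * \<bar>real_of_int w\<bar>)^2"
      by (intro power_mono) auto
    then have "(?X z)^2 \<le> ?q"
      by (simp add: power_mult_distrib)
    then show ?thesis
      using le_one_minus_exp_neg_add_square[of "?X z"] X cw by linarith
  qed
  have "measure_pmf.expectation (trunc_dlaplace c N) ?X = (\<Sum>z\<in>?S. ?g z * ?X z)"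
    by (subst integral_measure_pmf_real[of ?S])
      (auto simp: pmf_trunc_dlaplace mult.commute dest: subsetD[OF set_pmf_trunc_dlaplace])
  also have "\<dots> \<le> (\<Sum>z\<in>?S. ?g z * (1 + ?q) - ?g z * exp (- ?X z))"
  proof (intro sum_mono)
    fix z
    have "?g z * ?X z \<le> ?g z * (1 - exp (- ?X z) + ?q)"
      by (intro mult_left_mono pointwise trunc_dlaplace_density_nonneg)
    then show "?g z * ?X z \<le> ?g z * (1 + ?q) - ?g z * exp (- ?X z)"
      by (simp add: algebra_simps)
  qed
  also have "\<dots> = 1 + ?q - (\<Sum>z\<in>?S. ?g z * exp (- ?X z))"
    by (simp add: sum_subtractf sum_trunc_dlaplace_density flip: sum_distrib_right)
  also have "\<dots> \<le> 1 + ?q - (\<Sum>z\<in>?S. ?g (z + w))"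
    by (intro diff_left_mono sum_mono trunc_dlaplace_density_shift_le) auto
  finally show ?thesis
    using sum_trunc_dlaplace_density_shift_ge[OF c wN] by linarith
qed

section \<open>Privacy of shifted product noise\<close>

lemma measure_Pi_pmf_component:
  assumes "finite A" "j \<in> A"
  shows "measure (Pi_pmf A d p) {f. P (f j)} = measure (p j) {z. P z}"
proof -
  have "measure (Pi_pmf A d p) {f. P (f j)} = measure (map_pmf (\<lambda>f. f j) (Pi_pmf A d p)) {z. P z}"
    by simp
  then show ?thesis
    using assms by (simp add: Pi_pmf_component)
qed

lemma expectation_Pi_pmf_component:
  fixes h :: "'b \<Rightarrow> real"
  assumes "finite A" "j \<in> A"
  shows "measure_pmf.expectation (Pi_pmf A d p) (\<lambda>f. h (f j)) = measure_pmf.expectation (p j) h"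
proof -
  have "measure_pmf.expectation (Pi_pmf A d p) (\<lambda>f. h (f j))
      = measure_pmf.expectation (map_pmf (\<lambda>f. f j) (Pi_pmf A d p)) h"
    by (rule integral_map_pmf[symmetric])
  then show ?thesis
    using assms by (simp add: Pi_pmf_component)
qed

text \<open>In the application, w is the difference of the exact answers on two neighbouring
  inputs.\<close>
locale trunc_dlaplace_shift =
  fixes U :: "'a set" and w :: "'a \<Rightarrow> int" and c :: real and N B :: nat
  assumes finite_U: "finite U"
    and shift_outside: "\<And>j. j \<notin> U \<Longrightarrow> w j = 0"
    and c_pos: "c > 0"
    and shift_bounded: "\<And>j. \<bar>w j\<bar> \<le> int B"
    and c_B: "c * B \<le> 1"
    and B_le_N: "B \<le> N"
begin

abbreviation noise :: "('a \<Rightarrow> int) pmf" where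
  "noise \<equiv> Pi_pmf U 0 (\<lambda>_. trunc_dlaplace c N)"

abbreviation noise_range :: "('a \<Rightarrow> int) set" where
  "noise_range \<equiv> PiE_dflt U 0 (\<lambda>_. {-int N..int N})"

abbreviation tail :: real where
  "tail \<equiv> 2 * exp (-c * real (N - B + 1))"

definition privacy_loss :: "('a \<Rightarrow> int) \<Rightarrow> real" where
  "privacy_loss f = (\<Sum>j\<in>U. laplace_loss c (w j) (f j))"

lemma set_pmf_noise: "set_pmf noise \<subseteq> noise_range"
proof
  fix f assume "f \<in> set_pmf noise"
  then have "f \<in> PiE_dflt U 0 (set_pmf \<circ> (\<lambda>_. trunc_dlaplace c N))"
    using set_Pi_pmf_subset'[OF finite_U, of 0 "\<lambda>_. trunc_dlaplace c N"] by blast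
  then show "f \<in> noise_range"
    using set_pmf_trunc_dlaplace[of c N] unfolding PiE_dflt_def by auto
qed

lemma measure_noise: "measure noise A = (\<Sum>f\<in>A \<inter> noise_range. pmf noise f)"
proof -
  have fin: "finite noise_range"
    by (intro finite_PiE_dflt finite_U) auto
  have "A \<inter> noise_range \<inter> set_pmf noise = A \<inter> set_pmf noise"
    using set_pmf_noise by blast
  then have "measure noise A = measure noise (A \<inter> noise_range)"
    by (metis measure_Int_set_pmf)
  also have "\<dots> = (\<Sum>f\<in>A \<inter> noise_range. pmf noise f)"
    using fin by (intro measure_measure_pmf_finite) auto
  finally show ?thesis .
qed

lemma pmf_noise_shift:
  assumes f: "f \<in> noise_range" and in_range: "\<forall>j\<in>U. \<bar>f j + w j\<bar> \<le> int N"
  shows "pmf noise f = pmf noise (\<lambda>j. f j + w j) * exp (privacy_loss f)"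
proof -
  have outside: "f j = 0" "f j + w j = 0" if "j \<notin> U" for j
    using f that shift_outside by (auto simp: PiE_dflt_def)
  have "pmf noise f = (\<Prod>j\<in>U. trunc_dlaplace_density c N (f j))"
    using outside by (simp add: pmf_Pi[OF finite_U] pmf_trunc_dlaplace)
  also have "\<dots> = (\<Prod>j\<in>U. trunc_dlaplace_density c N (f j + w j) * exp (laplace_loss c (w j) (f j)))"
    using f in_range by (intro prod.cong refl trunc_dlaplace_density_shift) (auto simp: PiE_dflt_def)
  also have "\<dots> = pmf noise (\<lambda>j. f j + w j) * exp (privacy_loss f)"
    using outside
    by (simp add: prod.distrib privacy_loss_def exp_sum[OF finite_U] pmf_Pi[OF finite_U] pmf_trunc_dlaplace)
  finally show ?thesis .
qed

lemma measure_shift_low_loss_le: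
  "measure noise ({f. (\<lambda>j. f j + w j) \<in> E} \<inter> {f. (\<forall>j\<in>U. \<bar>f j + w j\<bar> \<le> int N) \<and> privacy_loss f \<le> \<epsilon>})
    \<le> exp \<epsilon> * measure noise E"
proof -
  define sh where "sh = (\<lambda>f::'a \<Rightarrow> int. \<lambda>j. f j + w j)"
  define X where "X = {f. sh f \<in> E} \<inter> {f. (\<forall>j\<in>U. \<bar>f j + w j\<bar> \<le> int N) \<and> privacy_loss f \<le> \<epsilon>} \<inter> noise_range"
  have "finite X"
    unfolding X_def by (intro finite_Int disjI2 finite_PiE_dflt finite_U) auto
  have "inj_on sh X"
    by (auto simp: inj_on_def sh_def fun_eq_iff)
  have "measure noise ({f. sh f \<in> E} \<inter> {f. (\<forall>j\<in>U. \<bar>f j + w j\<bar> \<le> int N) \<and> privacy_loss f \<le> \<epsilon>})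
      = (\<Sum>f\<in>X. pmf noise f)"
    by (simp add: measure_noise X_def Int_assoc)
  also have "\<dots> \<le> (\<Sum>f\<in>X. exp \<epsilon> * pmf noise (sh f))"
  proof (intro sum_mono)
    fix f assume "f \<in> X"
    then have "pmf noise f = pmf noise (sh f) * exp (privacy_loss f)" and "privacy_loss f \<le> \<epsilon>"
      using pmf_noise_shift[of f] by (auto simp: X_def sh_def)
    moreover have "pmf noise (sh f) * exp (privacy_loss f) \<le> pmf noise (sh f) * exp \<epsilon>"
      using \<open>privacy_loss f \<le> \<epsilon>\<close> by (intro mult_left_mono) auto
    ultimately show "pmf noise f \<le> exp \<epsilon> * pmf noise (sh f)"
      by (simp add: mult.commute)
  qed
  also have "\<dots> = exp \<epsilon> * measure noise (sh ` X)"
    using \<open>finite X\<close> \<open>inj_on sh X\<close>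
    by (simp add: sum_distrib_left sum.reindex measure_measure_pmf_finite)
  also have "\<dots> \<le> exp \<epsilon> * measure noise E"
    by (intro mult_left_mono measure_pmf.finite_measure_mono) (auto simp: X_def)
  finally show ?thesis
    by (simp add: sh_def)
qed

lemma measure_shift_out_of_range_le:
  "measure noise {f. \<exists>j\<in>U. \<bar>f j + w j\<bar> > int N} \<le> real (card U) * tail"
proof -
  have "measure noise {f. \<exists>j\<in>U. \<bar>f j + w j\<bar> > int N} = measure noise (\<Union>j\<in>U. {f. \<bar>f j + w j\<bar> > int N})"
    by (intro arg_cong[where f = "measure noise"]) auto
  also have "\<dots> \<le> (\<Sum>j\<in>U. measure noise {f. \<bar>f j + w j\<bar> > int N})"
    by (rule measure_pmf.finite_measure_subadditive_finite) (use finite_U in auto)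
  also have "\<dots> \<le> (\<Sum>j\<in>U. tail)"
  proof (intro sum_mono)
    fix j assume "j \<in> U"
    then have "measure noise {f. \<bar>f j + w j\<bar> > int N} = measure (trunc_dlaplace c N) {z. \<bar>z + w j\<bar> > int N}"
      by (rule measure_Pi_pmf_component[OF finite_U])
    also have "\<dots> \<le> measure (trunc_dlaplace c N) {z. \<bar>z\<bar> \<ge> int (N - B + 1)}"
      using shift_bounded[of j] B_le_N by (intro measure_pmf.finite_measure_mono) auto
    also have "\<dots> \<le> tail"
      by (rule trunc_dlaplace_tail) (use c_pos in simp)
    finally show "measure noise {f. \<bar>f j + w j\<bar> > int N} \<le> tail" .
  qed
  finally show ?thesis
    by simp
qed

lemma expected_laplace_loss_le:
  assumes "j \<in> U"
  shows "measure_pmf.expectation noise (\<lambda>f. laplace_loss c (w j) (f j)) \<le> tail + c^2 * (real_of_int (w j))^2"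
proof -
  have "measure_pmf.expectation noise (\<lambda>f. laplace_loss c (w j) (f j))
      = measure_pmf.expectation (trunc_dlaplace c N) (laplace_loss c (w j))"
    by (rule expectation_Pi_pmf_component[OF finite_U assms])
  also have "\<dots> \<le> 2 * exp (-c * real (N - nat \<bar>w j\<bar> + 1)) + c^2 * (real_of_int (w j))^2"
  proof (rule trunc_dlaplace_expected_loss)
    have "\<bar>real_of_int (w j)\<bar> \<le> real B"
      using shift_bounded[of j] by (metis of_int_abs of_int_le_iff of_int_of_nat_eq)
    then have "c * \<bar>real_of_int (w j)\<bar> \<le> c * real B"
      using c_pos by (intro mult_left_mono) auto
    then show "c * \<bar>real_of_int (w j)\<bar> \<le> 1"
      using c_B by linarith
  qed (use c_pos shift_bounded[of j] B_le_N in auto)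
  also have "exp (-c * real (N - nat \<bar>w j\<bar> + 1)) \<le> exp (-c * real (N - B + 1))"
    using shift_bounded[of j] B_le_N c_pos by (auto intro!: mult_left_mono)
  finally show ?thesis
    by simp
qed

lemma sum_expected_laplace_loss_le:
  "(\<Sum>j\<in>U. measure_pmf.expectation noise (\<lambda>f. laplace_loss c (w j) (f j)))
    \<le> real (card U) * tail + c^2 * (\<Sum>j\<in>U. (real_of_int (w j))^2)"
proof -
  have "(\<Sum>j\<in>U. measure_pmf.expectation noise (\<lambda>f. laplace_loss c (w j) (f j)))
      \<le> (\<Sum>j\<in>U. tail + c^2 * (real_of_int (w j))^2)"
    by (intro sum_mono expected_laplace_loss_le)
  then show ?thesis
    by (simp add: sum.distrib sum_distrib_left)
qed

lemma privacy_loss_deviation: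
  assumes "s \<ge> 0" and Q: "(\<Sum>j\<in>U. (real_of_int (w j))^2) > 0"
  shows "measure noise {f. privacy_loss f \<ge> (\<Sum>j\<in>U. measure_pmf.expectation noise (\<lambda>f. laplace_loss c (w j) (f j))) + s}
    \<le> exp (- (s^2) / (2 * c^2 * (\<Sum>j\<in>U. (real_of_int (w j))^2)))"
proof -
  let ?X = "\<lambda>j f. laplace_loss c (w j) (f j)" and ?b = "\<lambda>j. c * \<bar>real_of_int (w j)\<bar>"
  interpret H: Hoeffding_ineq "measure_pmf noise" U ?X "\<lambda>j. - ?b j" ?b
    "\<Sum>j\<in>U. measure_pmf.expectation noise (?X j)"
  proof unfold_locales
    have "prob_space.indep_vars (measure_pmf noise) (\<lambda>_. count_space UNIV) (\<lambda>j f. f j) U"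
      by (rule indep_vars_Pi_pmf[OF finite_U])
    then show "prob_space.indep_vars (measure_pmf noise) (\<lambda>_. borel) ?X U"
      by (rule prob_space.indep_vars_compose2[OF measure_pmf.prob_space_axioms]) auto
    show "AE f in measure_pmf noise. ?X j f \<in> {- ?b j..?b j}" for j
    proof (intro AE_pmfI)
      fix f
      have "\<bar>?X j f\<bar> \<le> ?b j"
        by (rule abs_laplace_loss_le) (use c_pos in simp)
      then show "?X j f \<in> {- ?b j..?b j}"
        by (simp add: abs_le_iff)
    qed
  qed (simp_all add: finite_U)
  let ?Q = "\<Sum>j\<in>U. (real_of_int (w j))^2"
  have width: "(\<Sum>j\<in>U. (?b j - - ?b j)^2) = 4 * c^2 * ?Q"
    by (simp add: sum_distrib_left power_mult_distrib algebra_simps)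
  have "measure noise {f. privacy_loss f \<ge> (\<Sum>j\<in>U. measure_pmf.expectation noise (?X j)) + s}
      \<le> exp (-2 * s^2 / (4 * c^2 * ?Q))"
    using H.Hoeffding_ineq_ge[OF assms(1)] Q c_pos unfolding width by (simp add: privacy_loss_def)
  also have "-2 * s^2 / (4 * c^2 * ?Q) = - (s^2) / (2 * c^2 * ?Q)"
    by simp
  finally show ?thesis .
qed

lemma privacy_loss_tail:
  assumes Q: "(\<Sum>j\<in>U. (real_of_int (w j))^2) \<le> Q"
    and mean: "c^2 * Q \<le> \<epsilon>/4" and dev: "8 * c^2 * Q * ln (2/\<delta>) \<le> \<epsilon>^2"
    and tail: "real (card U) * tail \<le> \<epsilon>/4"
    and \<delta>: "0 < \<delta>" "\<delta> \<le> 1" and \<epsilon>: "0 < \<epsilon>"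
  shows "measure noise {f. privacy_loss f > \<epsilon>} \<le> \<delta>/2"
proof (cases "(\<Sum>j\<in>U. (real_of_int (w j))^2) = 0")
  case True
  then have "\<forall>j\<in>U. w j = 0"
    using finite_U by (subst (asm) sum_nonneg_eq_0_iff) auto
  then have "privacy_loss f = 0" for f
    by (simp add: privacy_loss_def laplace_loss_def)
  then show ?thesis
    using \<epsilon> \<delta> by simp
next
  case False
  let ?Q = "\<Sum>j\<in>U. (real_of_int (w j))^2"
  let ?\<mu> = "\<Sum>j\<in>U. measure_pmf.expectation noise (\<lambda>f. laplace_loss c (w j) (f j))"
  have Q_pos: "?Q > 0"
    using False by (simp add: sum_nonneg order_le_neq_trans)
  have "?\<mu> \<le> real (card U) * tail + c^2 * ?Q"
    by (rule sum_expected_laplace_loss_le)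
  also have "c^2 * ?Q \<le> c^2 * Q"
    using Q by (intro mult_left_mono) auto
  finally have "?\<mu> \<le> \<epsilon>/2"
    using tail mean by linarith
  then have "measure noise {f. privacy_loss f > \<epsilon>} \<le> measure noise {f. privacy_loss f \<ge> ?\<mu> + \<epsilon>/2}"
    by (intro measure_pmf.finite_measure_mono) auto
  also have "\<dots> \<le> exp (- ((\<epsilon>/2)^2) / (2 * c^2 * ?Q))"
    by (rule privacy_loss_deviation) (use \<epsilon> Q_pos in auto)
  also have "\<dots> \<le> exp (- ln (2/\<delta>))"
  proof -
    have "8 * c^2 * ?Q * ln (2/\<delta>) \<le> 8 * c^2 * Q * ln (2/\<delta>)"
      using Q \<delta> by (intro mult_right_mono mult_left_mono) auto
    then have "ln (2/\<delta>) * (8 * c^2 * ?Q) \<le> \<epsilon>^2"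
      using dev by (simp only: mult.commute)
    then have "ln (2/\<delta>) \<le> (\<epsilon>/2)^2 / (2 * c^2 * ?Q)"
      using Q_pos c_pos by (simp add: pos_le_divide_eq power_divide)
    then show ?thesis
      by simp
  qed
  also have "\<dots> = \<delta>/2"
    using \<delta> by (simp add: exp_minus)
  finally show ?thesis .
qed

lemma measure_shift_le:
  assumes Q: "(\<Sum>j\<in>U. (real_of_int (w j))^2) \<le> Q"
    and mean: "c^2 * Q \<le> \<epsilon>/4" and dev: "8 * c^2 * Q * ln (2/\<delta>) \<le> \<epsilon>^2"
    and tail: "real (card U) * tail \<le> min (\<delta>/2) (\<epsilon>/4)"
    and \<delta>: "0 < \<delta>" "\<delta> \<le> 1" and \<epsilon>: "0 < \<epsilon>"
  shows "measure noise {f. (\<lambda>j. f j + w j) \<in> E} \<le> exp \<epsilon> * measure noise E + \<delta>"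
proof -
  define Good where "Good = {f. (\<forall>j\<in>U. \<bar>f j + w j\<bar> \<le> int N) \<and> privacy_loss f \<le> \<epsilon>}"
  have "- Good \<subseteq> {f. \<exists>j\<in>U. \<bar>f j + w j\<bar> > int N} \<union> {f. privacy_loss f > \<epsilon>}"
    by (auto simp: Good_def not_le)
  then have "measure noise (- Good)
      \<le> measure noise {f. \<exists>j\<in>U. \<bar>f j + w j\<bar> > int N} + measure noise {f. privacy_loss f > \<epsilon>}"
    by (intro order_trans[OF measure_pmf.finite_measure_mono measure_subadditive])
      (auto simp: measure_pmf.emeasure_eq_measure)
  also have "\<dots> \<le> \<delta>"
    using measure_shift_out_of_range_le privacy_loss_tail[OF Q mean dev _ \<delta> \<epsilon>] tail by simp
  finally have bad: "measure noise (- Good) \<le> \<delta>" .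
  have "measure noise {f. (\<lambda>j. f j + w j) \<in> E}
      \<le> measure noise ({f. (\<lambda>j. f j + w j) \<in> E} \<inter> Good) + measure noise (- Good)"
    by (intro order_trans[OF measure_pmf.finite_measure_mono measure_subadditive])
      (auto simp: measure_pmf.emeasure_eq_measure)
  then show ?thesis
    using measure_shift_low_loss_le[of E \<epsilon>] bad unfolding Good_def by linarith
qed

end

section \<open>The binary tree of histogram increments\<close>

definition tree_levels :: "nat \<Rightarrow> nat set" where
  "tree_levels T = {l. 2^l \<le> T}"

text \<open>Node (l, m, i) of the binary tree stands for the dyadic block of time steps
  (m 2^l, (m+1) 2^l] and the degree i; only blocks inside [1, T] occur.\<close>
definition tree_nodes :: "nat \<Rightarrow> nat \<Rightarrow> (nat \<times> nat \<times> nat) set" where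
  "tree_nodes n T = (SIGMA l:tree_levels T. SIGMA m:{..<T div 2^l}. {..<n})"

definition hist_increment :: "nat \<Rightarrow> update list \<Rightarrow> nat \<times> nat \<times> nat \<Rightarrow> int" where
  "hist_increment n xs = (\<lambda>(l, m, i).
     int (deg_hist n (graph_at xs (Suc m * 2^l)) i) - int (deg_hist n (graph_at xs (m * 2^l)) i))"

definition tree_increments :: "nat \<Rightarrow> nat \<Rightarrow> update list \<Rightarrow> nat \<times> nat \<times> nat \<Rightarrow> int" where
  "tree_increments n T xs p = (if p \<in> tree_nodes n T then hist_increment n xs p else 0)"

definition degree_indicator_change :: "update list \<Rightarrow> nat \<Rightarrow> nat \<Rightarrow> nat \<Rightarrow> nat \<Rightarrow> int" where
  "degree_indicator_change xs v s t i =
     (if degree_at xs t v = i then 1 else 0) - (if degree_at xs s v = i then 1 else 0)"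

lemma tree_levels_subset: "tree_levels T \<subseteq> {..T}"
proof
  fix l assume "l \<in> tree_levels T"
  then have "2^l \<le> T"
    by (simp add: tree_levels_def)
  then show "l \<in> {..T}"
    using less_exp[of l] by (simp del: less_exp)
qed

lemma finite_tree_levels: "finite (tree_levels T)"
  using tree_levels_subset finite_subset by blast

lemma finite_tree_nodes: "finite (tree_nodes n T)"
  unfolding tree_nodes_def using finite_tree_levels by (intro finite_SigmaI) auto

lemma hist_increment_eq_sum:
  "hist_increment n xs (l, m, i) = (\<Sum>v<n. degree_indicator_change xs v (m * 2^l) (Suc m * 2^l) i)"
  by (simp add: hist_increment_def deg_hist_eq_sum degree_indicator_change_def degree_at_def sum_subtractf)

lemma sum_abs_degree_indicator_change_le:
  assumes "s \<le> t"
  shows "(\<Sum>i<n. \<bar>degree_indicator_change xs v s t i\<bar>) \<le> 2 * (int (degree_at xs t v) - int (degree_at xs s v))"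
proof (cases "degree_at xs t v = degree_at xs s v")
  case True
  then show ?thesis
    by (simp add: degree_indicator_change_def)
next
  case False
  then have "degree_at xs s v < degree_at xs t v"
    using degree_at_mono[OF assms, of xs v] by simp
  have "(\<Sum>i<n. \<bar>degree_indicator_change xs v s t i\<bar>)
      \<le> (\<Sum>i<n. (if degree_at xs t v = i then 1 else 0) + (if degree_at xs s v = i then 1 else 0))"
    by (intro sum_mono) (simp add: degree_indicator_change_def)
  also have "\<dots> \<le> 2"
    by (simp add: sum.distrib)
  also have "\<dots> \<le> 2 * (int (degree_at xs t v) - int (degree_at xs s v))"
    using \<open>degree_at xs s v < degree_at xs t v\<close> by simp
  finally show ?thesis .
qed

text \<open>Within one level the blocks are disjoint, so the changes telescope to the final
  degree of v, which is at most n.\<close>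
lemma sum_level_abs_degree_indicator_change_le:
  assumes "valid_stream n T xs"
  shows "(\<Sum>m<K. \<Sum>i<n. \<bar>degree_indicator_change xs v (m * 2^l) (Suc m * 2^l) i\<bar>) \<le> 2 * int n"
proof -
  let ?d = "\<lambda>m. int (degree_at xs (m * 2^l) v)"
  have "(\<Sum>m<K. \<Sum>i<n. \<bar>degree_indicator_change xs v (m * 2^l) (Suc m * 2^l) i\<bar>)
      \<le> (\<Sum>m<K. 2 * (?d (Suc m) - ?d m))"
    by (intro sum_mono sum_abs_degree_indicator_change_le) simp
  also have "\<dots> = 2 * (\<Sum>m<K. ?d (Suc m) - ?d m)"
    by (simp add: sum_distrib_left)
  also have "\<dots> = 2 * (?d K - ?d 0)"
    by (simp only: sum_lessThan_telescope[of ?d])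
  also have "\<dots> \<le> 2 * int n"
    using degree_at_le[OF assms, of "K * 2^l" v] by simp
  finally show ?thesis .
qed

locale neighboring_degrees =
  fixes n T :: nat and xs ys :: "update list" and A :: "nat set"
  assumes valid_xs: "valid_stream n T xs" and valid_ys: "valid_stream n T ys"
    and finite_A: "finite A" and card_A: "card A \<le> 4"
    and degree_at_eq: "\<And>v t. v \<notin> A \<Longrightarrow> degree_at xs t v = degree_at ys t v"
begin

lemma hist_increment_diff_eq:
  "hist_increment n xs (l, m, i) - hist_increment n ys (l, m, i) =
     (\<Sum>v\<in>{..<n} \<inter> A. degree_indicator_change xs v (m * 2^l) (Suc m * 2^l) i
        - degree_indicator_change ys v (m * 2^l) (Suc m * 2^l) i)"
  unfolding hist_increment_eq_sum sum_subtractf[symmetric]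
  by (rule sum.mono_neutral_right) (auto simp: degree_indicator_change_def degree_at_eq)

lemma card_A_lessThan: "card ({..<n} \<inter> A) \<le> 4"
  using card_A card_mono[OF finite_A, of "{..<n} \<inter> A"] by auto

lemma abs_hist_increment_diff_le: "\<bar>hist_increment n xs p - hist_increment n ys p\<bar> \<le> 8"
proof -
  obtain l m i where p: "p = (l, m, i)"
    by (cases p) auto
  have "\<bar>hist_increment n xs p - hist_increment n ys p\<bar>
      \<le> (\<Sum>v\<in>{..<n} \<inter> A. \<bar>degree_indicator_change xs v (m * 2^l) (Suc m * 2^l) i
          - degree_indicator_change ys v (m * 2^l) (Suc m * 2^l) i\<bar>)"
    unfolding p hist_increment_diff_eq by (rule sum_abs)
  also have "\<dots> \<le> (\<Sum>v\<in>{..<n} \<inter> A. 2)"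
    by (intro sum_mono) (simp add: degree_indicator_change_def)
  also have "\<dots> \<le> 8"
    using card_A_lessThan by simp
  finally show ?thesis .
qed

lemma sum_level_abs_hist_increment_diff_le:
  "(\<Sum>m<K. \<Sum>i<n. \<bar>hist_increment n xs (l, m, i) - hist_increment n ys (l, m, i)\<bar>) \<le> 16 * int n"
proof -
  let ?dx = "\<lambda>v m i. \<bar>degree_indicator_change xs v (m * 2^l) (Suc m * 2^l) i\<bar>"
  let ?dy = "\<lambda>v m i. \<bar>degree_indicator_change ys v (m * 2^l) (Suc m * 2^l) i\<bar>"
  have "(\<Sum>m<K. \<Sum>i<n. \<bar>hist_increment n xs (l, m, i) - hist_increment n ys (l, m, i)\<bar>)
      \<le> (\<Sum>m<K. \<Sum>i<n. \<Sum>v\<in>{..<n} \<inter> A. ?dx v m i + ?dy v m i)"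
  proof (intro sum_mono)
    fix m i
    have "\<bar>hist_increment n xs (l, m, i) - hist_increment n ys (l, m, i)\<bar>
        \<le> (\<Sum>v\<in>{..<n} \<inter> A. \<bar>degree_indicator_change xs v (m * 2^l) (Suc m * 2^l) i
          - degree_indicator_change ys v (m * 2^l) (Suc m * 2^l) i\<bar>)"
      unfolding hist_increment_diff_eq by (rule sum_abs)
    also have "\<dots> \<le> (\<Sum>v\<in>{..<n} \<inter> A. ?dx v m i + ?dy v m i)"
      by (intro sum_mono abs_triangle_ineq4)
    finally show "\<bar>hist_increment n xs (l, m, i) - hist_increment n ys (l, m, i)\<bar>
        \<le> (\<Sum>v\<in>{..<n} \<inter> A. ?dx v m i + ?dy v m i)" .
  qed
  also have "\<dots> = (\<Sum>v\<in>{..<n} \<inter> A. (\<Sum>m<K. \<Sum>i<n. ?dx v m i) + (\<Sum>m<K. \<Sum>i<n. ?dy v m i))"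
    by (simp add: sum.distrib sum.swap[of _ "{..<n} \<inter> A"] sum.swap[of _ "{..<n}" "{..<K}"])
  also have "\<dots> \<le> (\<Sum>v\<in>{..<n} \<inter> A. 2 * int n + 2 * int n)"
    by (intro sum_mono add_mono sum_level_abs_degree_indicator_change_le[OF valid_xs]
        sum_level_abs_degree_indicator_change_le[OF valid_ys])
  also have "\<dots> = int (card ({..<n} \<inter> A)) * (4 * int n)"
    by simp
  also have "\<dots> \<le> 4 * (4 * int n)"
    using card_A_lessThan by (intro mult_right_mono) auto
  finally show ?thesis
    by simp
qed

text \<open>The l2-sensitivity of the tree is only logarithmic in T: each entry changes by at most
  8, and on each level the changes sum to O(n).\<close>
lemma sum_square_tree_increments_diff_le:
  "(\<Sum>p\<in>tree_nodes n T. (real_of_int (tree_increments n T xs p - tree_increments n T ys p))^2)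
    \<le> 128 * real n * real (card (tree_levels T))"
proof -
  let ?D = "\<lambda>p. hist_increment n xs p - hist_increment n ys p"
  have "(real_of_int (?D p))^2 \<le> 8 * real_of_int \<bar>?D p\<bar>" for p
  proof -
    have "(real_of_int (?D p))^2 = real_of_int \<bar>?D p\<bar> * real_of_int \<bar>?D p\<bar>"
      by (simp add: power2_eq_square)
    also have "\<dots> \<le> 8 * real_of_int \<bar>?D p\<bar>"
      using abs_hist_increment_diff_le[of p] by (intro mult_right_mono) auto
    finally show ?thesis .
  qed
  then have "(\<Sum>p\<in>tree_nodes n T. (real_of_int (tree_increments n T xs p - tree_increments n T ys p))^2)
      \<le> 8 * real_of_int (\<Sum>p\<in>tree_nodes n T. \<bar>?D p\<bar>)"
    by (simp add: sum_distrib_left tree_increments_def sum_mono)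
  also have "(\<Sum>p\<in>tree_nodes n T. \<bar>?D p\<bar>)
      = (\<Sum>l\<in>tree_levels T. \<Sum>m<T div 2^l. \<Sum>i<n. \<bar>?D (l, m, i)\<bar>)"
    unfolding tree_nodes_def using finite_tree_levels by (simp add: sum.Sigma)
  also have "\<dots> \<le> (\<Sum>l\<in>tree_levels T. 16 * int n)"
    by (intro sum_mono sum_level_abs_hist_increment_diff_le)
  finally show ?thesis
    by (simp add: mult_ac)
qed

end

section \<open>The tree mechanism\<close>

text \<open>Binary expansion of t: the time steps (0, t] form the disjoint union of the dyadic
  blocks ((q - 1) 2^l, q 2^l] with q = t div 2^l odd.\<close>
lemma dyadic_telescope:
  fixes F :: "nat \<Rightarrow> 'a::ab_group_add"
  assumes "t < 2^L"
  shows "F t - F 0 = (\<Sum>l<L. if odd (t div 2^l)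
    then F (t div 2^l * 2^l) - F ((t div 2^l - 1) * 2^l) else 0)"
proof -
  define G where "G = (\<lambda>l. F (t div 2^l * 2^l))"
  have step: "(if odd (t div 2^l) then F (t div 2^l * 2^l) - F ((t div 2^l - 1) * 2^l) else 0)
      = G l - G (Suc l)" for l
  proof -
    define q where "q = t div 2^l"
    have "t div 2^Suc l = q div 2"
      unfolding q_def power_Suc2 by (rule div_mult2_eq)
    then have "G (Suc l) = F (q div 2 * 2 * 2^l)"
      by (simp add: G_def mult.assoc mult.commute[of 2])
    moreover have "q div 2 * 2 = (if odd q then q - 1 else q)"
      by (simp add: mult.commute)
    ultimately show ?thesis
      by (simp add: G_def q_def)
  qed
  have "(\<Sum>l<L. if odd (t div 2^l) then F (t div 2^l * 2^l) - F ((t div 2^l - 1) * 2^l) else 0)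
      = G 0 - G L"
    by (simp add: step sum_lessThan_telescope')
  also have "G 0 - G L = F t - F 0"
    using assms by (simp add: G_def)
  finally show ?thesis
    by simp
qed

definition tree_estimate :: "nat \<Rightarrow> nat \<Rightarrow> (nat \<times> nat \<times> nat \<Rightarrow> int) \<Rightarrow> nat \<Rightarrow> nat \<Rightarrow> real" where
  "tree_estimate n T v t i = (if i < n then real (deg_hist n {} i) +
     (\<Sum>l<T+1. if odd (min t T div 2^l) then real_of_int (v (l, min t T div 2^l - 1, i)) else 0)
     else 0)"

text \<open>The noise of node p is r (to_nat p). At time |xs| the nodes read are the blocks of
  the binary expansion of |xs|, which are complete by then.\<close>
definition tree_mechanism :: "nat \<Rightarrow> nat \<Rightarrow> (nat \<Rightarrow> real) \<Rightarrow> update list \<Rightarrow> nat \<Rightarrow> real" where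
  "tree_mechanism n T r xs i = (if i < n then real (deg_hist n {} i) +
     (\<Sum>l<T+1. if odd (length xs div 2^l)
        then real_of_int (hist_increment n xs (l, length xs div 2^l - 1, i))
          + r (to_nat (l, length xs div 2^l - 1, i))
        else 0) else 0)"

definition encode_noise :: "(nat \<times> nat \<times> nat \<Rightarrow> int) \<Rightarrow> nat \<Rightarrow> real" where
  "encode_noise f = (\<lambda>k. real_of_int (f (from_nat k)))"

lemma tree_node_mem_tree_nodes:
  assumes "odd (t div 2^l)" "t \<le> T" "i < n"
  shows "(l, t div 2^l - 1, i) \<in> tree_nodes n T"
proof -
  have "t div 2^l \<ge> 1"
    using assms(1) by (cases "t div 2^l") auto
  then have "2^l \<le> t"
    by (metis div_less not_less not_one_le_zero)
  then have "l \<in> tree_levels T"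
    using assms(2) by (simp add: tree_levels_def)
  moreover have "t div 2^l \<le> T div 2^l"
    using assms(2) by (rule div_le_mono)
  ultimately show ?thesis
    using \<open>t div 2^l \<ge> 1\<close> assms(3) by (auto simp: tree_nodes_def)
qed

lemma hist_increment_take:
  assumes "odd (s div 2^l)" "s \<le> t"
  shows "hist_increment n (take t xs) (l, s div 2^l - 1, i) = hist_increment n xs (l, s div 2^l - 1, i)"
proof -
  have "s div 2^l \<ge> 1"
    using assms(1) by (cases "s div 2^l") auto
  moreover have "s div 2^l * 2^l \<le> t"
    using assms(2) div_times_less_eq_dividend le_trans by blast
  ultimately have "Suc (s div 2^l - 1) * 2^l \<le> t" "(s div 2^l - 1) * 2^l \<le> t"
    by (simp_all add: order_trans[OF mult_le_mono1[OF diff_le_self]])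
  then show ?thesis
    by (simp add: hist_increment_def graph_at_take)
qed

lemma mech_output_tree_mechanism:
  assumes "valid_stream n T xs"
  shows "mech_output (tree_mechanism n T) (encode_noise f) xs
    = tree_estimate n T (\<lambda>p. tree_increments n T xs p + f p)"
proof (intro ext)
  fix t i
  have len: "length (take t xs) = min t T"
    using assms by (simp add: valid_stream_def)
  have node: "real_of_int (hist_increment n (take t xs) (l, min t T div 2^l - 1, i))
        + encode_noise f (to_nat (l, min t T div 2^l - 1, i))
      = real_of_int (tree_increments n T xs (l, min t T div 2^l - 1, i) + f (l, min t T div 2^l - 1, i))"
    if "odd (min t T div 2^l)" "i < n" for l
    using that tree_node_mem_tree_nodes[OF that(1) _ that(2)] hist_increment_take[OF that(1)]
    by (simp add: tree_increments_def encode_noise_def)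
  show "mech_output (tree_mechanism n T) (encode_noise f) xs t i
      = tree_estimate n T (\<lambda>p. tree_increments n T xs p + f p) t i"
    unfolding mech_output_def tree_mechanism_def tree_estimate_def len
    using node by (intro if_cong refl arg_cong2[where f = "(+)"] sum.cong) auto
qed

lemma tree_estimate_exact:
  assumes "t \<le> T" "i < n"
  shows "tree_estimate n T (hist_increment n xs) t i = real (deg_hist n (graph_at xs t) i)"
proof -
  define F where "F = (\<lambda>s. real (deg_hist n (graph_at xs s) i))"
  have "t < 2^(T+1)"
    using assms(1) less_exp[of T] by (simp del: less_exp)
  then have "F t - F 0 = (\<Sum>l<T+1. if odd (t div 2^l)
      then F (t div 2^l * 2^l) - F ((t div 2^l - 1) * 2^l) else 0)"
    by (rule dyadic_telescope)
  also have "\<dots> = (\<Sum>l<T+1. if odd (t div 2^l)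
      then real_of_int (hist_increment n xs (l, t div 2^l - 1, i)) else 0)"
  proof (intro sum.cong refl)
    fix l
    show "(if odd (t div 2^l) then F (t div 2^l * 2^l) - F ((t div 2^l - 1) * 2^l) else 0)
        = (if odd (t div 2^l) then real_of_int (hist_increment n xs (l, t div 2^l - 1, i)) else 0)"
    proof (cases "odd (t div 2^l)")
      case True
      then have "Suc (t div 2^l - 1) = t div 2^l"
        by (cases "t div 2^l") auto
      then have "hist_increment n xs (l, t div 2^l - 1, i)
          = int (deg_hist n (graph_at xs (t div 2^l * 2^l)) i)
            - int (deg_hist n (graph_at xs ((t div 2^l - 1) * 2^l)) i)"
        by (simp only: hist_increment_def prod.case)
      then show ?thesis
        using True by (simp add: F_def)
    qed simp
  qed
  finally have "F t - F 0 = (\<Sum>l<T+1. if odd (t div 2^l)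
      then real_of_int (hist_increment n xs (l, t div 2^l - 1, i)) else 0)" .
  moreover have "min t T = t"
    using assms(1) by simp
  ultimately show ?thesis
    using assms(2) by (simp add: tree_estimate_def F_def)
qed

lemma tree_estimate_add_noise:
  assumes "t \<le> T" "i < n"
  shows "tree_estimate n T (\<lambda>p. tree_increments n T xs p + f p) t i
    = tree_estimate n T (hist_increment n xs) t i
      + (\<Sum>l<T+1. if odd (t div 2^l) then real_of_int (f (l, t div 2^l - 1, i)) else 0)"
proof -
  have node: "(if odd (t div 2^l) then real_of_int (tree_increments n T xs (l, t div 2^l - 1, i) + f (l, t div 2^l - 1, i)) else 0)
      = (if odd (t div 2^l) then real_of_int (hist_increment n xs (l, t div 2^l - 1, i)) else 0)
        + (if odd (t div 2^l) then real_of_int (f (l, t div 2^l - 1, i)) else 0)" for l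
    using tree_node_mem_tree_nodes[OF _ assms(1,2), of l] by (simp add: tree_increments_def)
  have "min t T = t"
    using assms(1) by simp
  then show ?thesis
    using assms(2) unfolding tree_estimate_def by (simp only: node sum.distrib if_True add.assoc)
qed

lemma abs_tree_estimate_noise_le:
  assumes "t \<le> T" "i < n" "\<forall>p\<in>tree_nodes n T. \<bar>real_of_int (f p)\<bar> \<le> a" "a \<ge> 0"
  shows "\<bar>\<Sum>l<T+1. if odd (t div 2^l) then real_of_int (f (l, t div 2^l - 1, i)) else 0\<bar>
    \<le> real (card (tree_levels T)) * a"
proof -
  define J where "J = {l \<in> {..<T+1}. odd (t div 2^l)}"
  have node: "(l, t div 2^l - 1, i) \<in> tree_nodes n T" if "l \<in> J" for l
    using that tree_node_mem_tree_nodes assms(1,2) by (auto simp: J_def)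
  then have "J \<subseteq> tree_levels T"
    by (auto simp: tree_nodes_def)
  have "\<bar>\<Sum>l<T+1. if odd (t div 2^l) then real_of_int (f (l, t div 2^l - 1, i)) else 0\<bar>
      = \<bar>\<Sum>l\<in>J. real_of_int (f (l, t div 2^l - 1, i))\<bar>"
    unfolding J_def by (subst sum.inter_filter) auto
  also have "\<dots> \<le> (\<Sum>l\<in>J. a)"
    using node assms(3) by (intro order_trans[OF sum_abs sum_mono]) auto
  also have "\<dots> \<le> real (card (tree_levels T)) * a"
    using card_mono[OF finite_tree_levels \<open>J \<subseteq> tree_levels T\<close>] assms(4)
    by (simp add: mult_right_mono)
  finally show ?thesis .
qed

definition tree_noise :: "nat \<Rightarrow> nat \<Rightarrow> real \<Rightarrow> nat \<Rightarrow> (nat \<times> nat \<times> nat \<Rightarrow> int) pmf" where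
  "tree_noise n T c N = Pi_pmf (tree_nodes n T) 0 (\<lambda>_. trunc_dlaplace c N)"

definition tree_randomness :: "nat \<Rightarrow> nat \<Rightarrow> real \<Rightarrow> nat \<Rightarrow> (nat \<Rightarrow> real) measure" where
  "tree_randomness n T c N = measure_pmf (map_pmf encode_noise (tree_noise n T c N))"

lemma measure_tree_randomness:
  "measure (tree_randomness n T c N) {r \<in> space (tree_randomness n T c N). P r}
    = measure (tree_noise n T c N) {f. P (encode_noise f)}"
  by (simp add: tree_randomness_def vimage_def)

lemma continual_mechanism_tree_mechanism:
  "continual_mechanism n T (tree_randomness n T c N) (tree_mechanism n T)"
  unfolding continual_mechanism_def tree_randomness_def
  by (simp add: measure_pmf.prob_space_axioms)

lemma tree_mechanism_dp:
  assumes c: "c > 0" "8 * c \<le> 1" and N: "8 \<le> N"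
    and mean: "c^2 * (128 * real n * real (card (tree_levels T))) \<le> \<epsilon>/4"
    and dev: "8 * c^2 * (128 * real n * real (card (tree_levels T))) * ln (2/\<delta>) \<le> \<epsilon>^2"
    and tail: "real (card (tree_nodes n T)) * (2 * exp (-c * real (N - 8 + 1))) \<le> min (\<delta>/2) (\<epsilon>/4)"
    and \<delta>: "0 < \<delta>" "\<delta> \<le> 1" and \<epsilon>: "0 < \<epsilon>"
  shows "event_level_DP n T \<epsilon> \<delta> (tree_randomness n T c N) (tree_mechanism n T)"
  unfolding event_level_DP_def
proof (intro allI impI)
  fix xs ys S
  assume xs: "valid_stream n T xs" and ys: "valid_stream n T ys" and "neighboring xs ys"
  obtain A where "finite A" "card A \<le> 4" "\<And>v t. v \<notin> A \<Longrightarrow> degree_at xs t v = degree_at ys t v"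
    using neighboring_degree_at_eq_outside[OF xs ys \<open>neighboring xs ys\<close>] by blast
  then interpret neighboring_degrees n T xs ys A
    using xs ys by unfold_locales
  define w where "w = (\<lambda>p. tree_increments n T xs p - tree_increments n T ys p)"
  interpret trunc_dlaplace_shift "tree_nodes n T" w c N 8
  proof unfold_locales
    show "\<bar>w p\<bar> \<le> int 8" for p
      using abs_hist_increment_diff_le[of p] by (simp add: w_def tree_increments_def)
  qed (use c N finite_tree_nodes in \<open>auto simp: w_def tree_increments_def\<close>)
  define E where "E = {f. tree_estimate n T (\<lambda>p. tree_increments n T ys p + f p) \<in> S}"
  have "{f. mech_output (tree_mechanism n T) (encode_noise f) xs \<in> S} = {f. (\<lambda>p. f p + w p) \<in> E}"
    by (simp add: mech_output_tree_mechanism[OF xs] E_def w_def add.commute add.left_commute)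
  moreover have "{f. mech_output (tree_mechanism n T) (encode_noise f) ys \<in> S} = E"
    by (simp add: mech_output_tree_mechanism[OF ys] E_def)
  moreover have "measure noise {f. (\<lambda>p. f p + w p) \<in> E} \<le> exp \<epsilon> * measure noise E + \<delta>"
    using sum_square_tree_increments_diff_le mean dev tail \<delta> \<epsilon>
    by (intro measure_shift_le) (auto simp: w_def)
  ultimately show "measure (tree_randomness n T c N) {r \<in> space (tree_randomness n T c N). mech_output (tree_mechanism n T) r xs \<in> S}
      \<le> exp \<epsilon> * measure (tree_randomness n T c N) {r \<in> space (tree_randomness n T c N). mech_output (tree_mechanism n T) r ys \<in> S} + \<delta>"
    by (simp add: measure_tree_randomness tree_noise_def)
qed

lemma tree_noise_bounded:
  assumes "c \<ge> 0" "a \<ge> 0"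
  shows "measure (tree_noise n T c N) {f. \<exists>p\<in>tree_nodes n T. \<bar>real_of_int (f p)\<bar> > a}
    \<le> real (card (tree_nodes n T)) * (2 * exp (-c * a))"
proof -
  have "measure (tree_noise n T c N) {f. \<exists>p\<in>tree_nodes n T. \<bar>real_of_int (f p)\<bar> > a}
      \<le> (\<Sum>p\<in>tree_nodes n T. measure (tree_noise n T c N) {f. \<bar>real_of_int (f p)\<bar> > a})"
  proof -
    have "{f. \<exists>p\<in>tree_nodes n T. \<bar>real_of_int (f p)\<bar> > a} = (\<Union>p\<in>tree_nodes n T. {f. \<bar>real_of_int (f p)\<bar> > a})"
      by auto
    then show ?thesis
      using finite_tree_nodes by (simp add: measure_pmf.finite_measure_subadditive_finite)
  qed
  also have "\<dots> = (\<Sum>p\<in>tree_nodes n T. measure (trunc_dlaplace c N) {z. \<bar>real_of_int z\<bar> > a})"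
    unfolding tree_noise_def
    by (intro sum.cong refl measure_Pi_pmf_component[OF finite_tree_nodes, where P = "\<lambda>z. \<bar>real_of_int z\<bar> > a"])
  also have "\<dots> \<le> (\<Sum>p\<in>tree_nodes n T. 2 * exp (-c * a))"
    by (intro sum_mono trunc_dlaplace_tail_real assms)
  finally show ?thesis
    by simp
qed

lemma tree_mechanism_accurate:
  assumes c: "c > 0" and a: "a \<ge> 0"
    and tail: "real (card (tree_nodes n T)) * (2 * exp (-c * a)) \<le> 1/3"
    and \<alpha>: "real (card (tree_levels T)) * a \<le> \<alpha>"
  shows "accurate n T (tree_randomness n T c N) (tree_mechanism n T) \<alpha>"
  unfolding accurate_def
proof (intro allI impI)
  fix xs assume xs: "valid_stream n T xs"
  define Good where "Good = {f. \<forall>p\<in>tree_nodes n T. \<bar>real_of_int (f p)\<bar> \<le> a}"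
  have "- Good = {f. \<exists>p\<in>tree_nodes n T. \<bar>real_of_int (f p)\<bar> > a}"
    by (auto simp: Good_def not_le)
  then have "measure (tree_noise n T c N) (- Good) \<le> 1/3"
    using tree_noise_bounded[of c a n T N] c a tail by simp
  then have "measure (tree_noise n T c N) Good \<ge> 2/3"
    using measure_pmf.prob_compl[of Good "tree_noise n T c N"] by (simp add: Compl_eq_Diff_UNIV)
  also have "Good \<subseteq> {f. \<forall>t\<in>{1..T}. \<forall>i<n.
      \<bar>tree_mechanism n T (encode_noise f) (take t xs) i - real (deg_hist n (graph_at xs t) i)\<bar> \<le> \<alpha>}"
  proof (intro subsetI CollectI ballI allI impI)
    fix f t i assume f: "f \<in> Good" and t: "t \<in> {1..T}" and i: "i < n"
    have "tree_mechanism n T (encode_noise f) (take t xs) i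
        = tree_estimate n T (\<lambda>p. tree_increments n T xs p + f p) t i"
      using mech_output_tree_mechanism[OF xs, of f] by (simp add: mech_output_def fun_eq_iff)
    then have "tree_mechanism n T (encode_noise f) (take t xs) i - real (deg_hist n (graph_at xs t) i)
        = (\<Sum>l<T+1. if odd (t div 2^l) then real_of_int (f (l, t div 2^l - 1, i)) else 0)"
      using t i by (simp add: tree_estimate_add_noise tree_estimate_exact)
    also have "\<bar>\<dots>\<bar> \<le> real (card (tree_levels T)) * a"
      using f t i a by (intro abs_tree_estimate_noise_le) (auto simp: Good_def)
    finally show "\<bar>tree_mechanism n T (encode_noise f) (take t xs) i - real (deg_hist n (graph_at xs t) i)\<bar> \<le> \<alpha>"
      using \<alpha> by linarith
  qed
  then have "measure (tree_noise n T c N) Good \<le> measure (tree_noise n T c N) {f. \<forall>t\<in>{1..T}. \<forall>i<n.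
      \<bar>tree_mechanism n T (encode_noise f) (take t xs) i - real (deg_hist n (graph_at xs t) i)\<bar> \<le> \<alpha>}"
    by (intro measure_pmf.finite_measure_mono) auto
  finally show "2/3 \<le> measure (tree_randomness n T c N) {r \<in> space (tree_randomness n T c N). \<forall>t\<in>{1..T}. \<forall>i<n.
      \<bar>tree_mechanism n T r (take t xs) i - real (deg_hist n (graph_at xs t) i)\<bar> \<le> \<alpha>}"
    by (simp add: measure_tree_randomness)
qed

section \<open>Choice of the parameters\<close>

lemma card_tree_levels_pos:
  assumes "T \<ge> 1"
  shows "card (tree_levels T) \<ge> 1"
proof -
  have "0 \<in> tree_levels T"
    using assms by (simp add: tree_levels_def)
  then show ?thesis
    using finite_tree_levels[of T] by (simp add: Suc_le_eq card_gt_0_iff) blast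
qed

lemma card_tree_levels_le_log:
  assumes "T \<ge> 1"
  shows "real (card (tree_levels T)) \<le> log 2 (real T) + 1"
proof -
  have "tree_levels T \<subseteq> {..nat \<lfloor>log 2 (real T)\<rfloor>}"
  proof
    fix l assume "l \<in> tree_levels T"
    then have "2^l \<le> T"
      by (simp add: tree_levels_def)
    then have "(2::real) powr (real l) \<le> real T"
      by (simp add: powr_realpow)
    then have "real l \<le> log 2 (real T)"
      using assms by (subst le_log_iff) auto
    then show "l \<in> {..nat \<lfloor>log 2 (real T)\<rfloor>}"
      by (simp add: le_nat_floor)
  qed
  then have "card (tree_levels T) \<le> card {..nat \<lfloor>log 2 (real T)\<rfloor>}"
    by (intro card_mono) auto
  then have "card (tree_levels T) \<le> nat \<lfloor>log 2 (real T)\<rfloor> + 1"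
    by simp
  moreover have "log 2 (real T) \<ge> 0"
    using assms by simp
  ultimately show ?thesis
    by linarith
qed

lemma card_tree_levels_le_ln:
  assumes "T \<ge> 1" "n \<ge> 1"
  shows "real (card (tree_levels T)) \<le> 4 * ln (real n + real T + 2)"
proof -
  define X where "X = real n + real T + 2"
  have ln2: "2/3 \<le> ln (2::real)"
    by (rule ln2_ge_two_thirds)
  have "ln 2 \<le> ln X" and "ln (real T) \<le> ln X" and "ln (real T) \<ge> 0"
    using assms by (simp_all add: X_def)
  have "log 2 (real T) = ln (real T) / ln 2"
    by (simp add: log_def)
  also have "\<dots> \<le> ln X / (2/3)"
    using ln2 \<open>ln (real T) \<le> ln X\<close> \<open>ln (real T) \<ge> 0\<close> by (intro frac_le) auto
  also have "\<dots> \<le> 2 * ln X"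
    using \<open>ln (real T) \<le> ln X\<close> \<open>ln (real T) \<ge> 0\<close> by simp
  finally have "log 2 (real T) \<le> 2 * ln X" .
  moreover have "1 \<le> 2 * ln X"
    using ln2 \<open>ln 2 \<le> ln X\<close> by linarith
  ultimately show ?thesis
    using card_tree_levels_le_log[OF assms(1)] by (simp add: X_def)
qed

lemma card_tree_nodes_le: "card (tree_nodes n T) \<le> card (tree_levels T) * T * n"
proof -
  have "card (tree_nodes n T) = (\<Sum>l\<in>tree_levels T. (T div 2^l) * n)"
    unfolding tree_nodes_def using finite_tree_levels
    by (simp add: card_cartesian_product)
  also have "\<dots> \<le> (\<Sum>l\<in>tree_levels T. T * n)"
    by (intro sum_mono mult_right_mono) auto
  finally show ?thesis
    by simp
qed

lemma ln_card_tree_nodes_le: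
  assumes "T \<ge> 1" "n \<ge> 1"
  shows "ln (6 * real (card (tree_nodes n T)) + 1) \<le> 6 * ln (real n + real T + 2)"
proof -
  define X where "X = real n + real T + 2"
  have X: "X \<ge> 4"
    using assms by (simp add: X_def)
  have "card (tree_levels T) \<le> T + 1"
    using card_mono[OF _ tree_levels_subset[of T]] by simp
  then have "real (card (tree_levels T) * T * n) \<le> X * X * X"
    unfolding of_nat_mult by (intro mult_mono) (auto simp: X_def)
  moreover have "real (card (tree_nodes n T)) \<le> real (card (tree_levels T) * T * n)"
    using card_tree_nodes_le[of n T] by (simp only: of_nat_le_iff)
  ultimately have "real (card (tree_nodes n T)) \<le> X^3"
    by (simp add: power3_eq_cube)
  moreover have "64 \<le> X^3"
    using power_mono[OF X, of 3] by simp
  then have "64 * X^3 \<le> X^3 * X^3"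
    using X by (intro mult_right_mono) auto
  ultimately have "6 * real (card (tree_nodes n T)) + 1 \<le> X^3 * X^3"
    using \<open>64 \<le> X^3\<close> by linarith
  then have "ln (6 * real (card (tree_nodes n T)) + 1) \<le> ln (X^6)"
    by (intro ln_mono) (auto simp flip: power_add)
  also have "\<dots> = 6 * ln X"
    by (simp add: ln_realpow)
  finally show ?thesis
    by (simp add: X_def)
qed

lemma ln_two_div_le:
  fixes \<delta> :: real
  assumes "0 < \<delta>" "\<delta> < 2/3"
  shows "ln (2/\<delta>) \<le> 4 * ln (1/\<delta>)"
proof -
  have "ln (1/\<delta>) \<ge> 1 - \<delta>"
    using ln_le_minus_one[OF assms(1)] assms(1) by (simp add: ln_div)
  moreover have "ln (2/\<delta>) = ln 2 + ln (1/\<delta>)"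
    using assms by (simp add: ln_div)
  ultimately show ?thesis
    using ln_2_less_1 assms by linarith
qed

lemma laplace_parameter_bounds:
  fixes \<epsilon> \<delta> Q :: real
  assumes \<epsilon>: "0 < \<epsilon>" "\<epsilon> < 1" and \<delta>: "0 < \<delta>" "\<delta> < 1" and Q: "Q \<ge> 128"
  defines "c \<equiv> \<epsilon> / sqrt (8 * Q * ln (2/\<delta>))"
  shows "c > 0" and "8 * c \<le> 1" and "c^2 * Q \<le> \<epsilon>/4" and "8 * c^2 * Q * ln (2/\<delta>) \<le> \<epsilon>^2"
proof -
  let ?lg = "ln (2/\<delta>)"
  have "ln 2 \<le> ?lg"
    using \<delta> by (subst ln_le_cancel_iff) (auto simp: field_simps)
  then have lg: "?lg \<ge> 1/2"
    using ln2_ge_two_thirds by linarith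
  have "128 * (1/2) \<le> Q * ?lg"
    using Q lg by (intro mult_mono) auto
  then have pos: "8 * Q * ?lg \<ge> 512"
    by simp
  then show "c > 0"
    using \<epsilon> by (simp add: c_def)
  have c2: "c^2 = \<epsilon>^2 / (8 * Q * ?lg)"
    using pos by (simp add: c_def power_divide)
  have "c^2 \<le> 1 / 512"
    unfolding c2 using \<epsilon> pos by (intro frac_le) (auto simp: power_le_one)
  then have "c^2 \<le> (1/8)^2"
    by (simp add: power2_eq_square)
  with \<open>c > 0\<close> show "8 * c \<le> 1"
    using power2_le_imp_le[of c "1/8"] by simp
  show "8 * c^2 * Q * ?lg \<le> \<epsilon>^2"
    unfolding c2 using pos by (simp add: field_simps)
  have "\<epsilon>^2 \<le> \<epsilon> * (2 * ?lg)"
    unfolding power2_eq_square using \<epsilon> lg by (intro mult_left_mono) auto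
  then show "c^2 * Q \<le> \<epsilon>/4"
    unfolding c2 using Q lg by (simp add: field_simps)
qed

lemma exp_tail_ceiling_le:
  fixes c m u :: real
  assumes "c > 0" "m > 0" "u \<ge> 0"
  shows "u * (2 * exp (-c * real (nat \<lceil>ln (8 * (u + 1) / m) / c\<rceil> + 1))) \<le> m/4"
proof -
  define Y where "Y = 8 * (u + 1) / m"
  have "Y > 0"
    using assms by (simp add: Y_def)
  have "ln Y / c \<le> real (nat \<lceil>ln Y / c\<rceil> + 1)"
    by linarith
  then have "ln Y \<le> c * real (nat \<lceil>ln Y / c\<rceil> + 1)"
    using assms(1) by (simp add: divide_le_eq mult.commute)
  then have "exp (-c * real (nat \<lceil>ln Y / c\<rceil> + 1)) \<le> exp (- ln Y)"
    by simp
  also have "\<dots> = m / (8 * (u + 1))"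
    using \<open>Y > 0\<close> by (simp add: exp_minus Y_def)
  finally have "u * (2 * exp (-c * real (nat \<lceil>ln Y / c\<rceil> + 1))) \<le> u * (2 * (m / (8 * (u + 1))))"
    using assms(3) by (intro mult_left_mono) auto
  also have "\<dots> \<le> m/4"
    using assms by (simp add: field_simps)
  finally show ?thesis
    by (simp add: Y_def)
qed

lemma tree_error_arith:
  fixes D L s q q' \<epsilon> x :: real
  assumes D: "1 \<le> D" "D \<le> 4 * L" and s: "0 \<le> s" "s \<le> 6 * L"
    and q: "0 \<le> q" "q \<le> 4 * q'" and x: "x \<ge> 0" and \<epsilon>: "\<epsilon> > 0"
  shows "D * (s * sqrt (8 * (128 * x * D) * q) / \<epsilon>) \<le> 6144 * L^3 * sqrt (x * q') / \<epsilon>"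
proof -
  have "8 * (128 * x * D) * q = 32^2 * (D * (x * q))"
    by (simp add: algebra_simps)
  then have "sqrt (8 * (128 * x * D) * q) = 32 * (sqrt D * sqrt (x * q))"
    by (simp add: real_sqrt_mult)
  also have "\<dots> \<le> 32 * (D * (2 * sqrt (x * q')))"
  proof -
    have "sqrt D * 1 \<le> sqrt D * sqrt D"
      using D(1) by (intro mult_left_mono) auto
    then have sqrt_D: "sqrt D \<le> D"
      using D(1) by simp
    have "x * q \<le> x * (4 * q')"
      using q x by (intro mult_left_mono) auto
    then have "sqrt (x * q) \<le> sqrt (4 * (x * q'))"
      by (intro real_sqrt_le_mono) (simp add: algebra_simps)
    also have "\<dots> = 2 * sqrt (x * q')"
      by (simp add: real_sqrt_mult)
    finally show ?thesis
      using sqrt_D D(1) q x by (intro mult_left_mono mult_mono) auto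
  qed
  finally have "D * (s * sqrt (8 * (128 * x * D) * q)) \<le> D * (s * (32 * (D * (2 * sqrt (x * q')))))"
    using D(1) s(1) by (intro mult_left_mono) auto
  also have "\<dots> \<le> (4 * L) * ((6 * L) * (32 * ((4 * L) * (2 * sqrt (x * q')))))"
    using D s q x by (intro mult_mono) auto
  also have "\<dots> = 6144 * L^3 * sqrt (x * q')"
    by (simp add: power3_eq_cube)
  finally show ?thesis
    using \<epsilon> by (simp add: divide_right_mono)
qed

lemma tree_mechanism_exists:
  fixes n T :: nat and \<epsilon> \<delta> :: real
  assumes n: "n \<ge> 1" and T: "T \<ge> 1" and \<epsilon>: "0 < \<epsilon>" "\<epsilon> < 1" and \<delta>: "0 < \<delta>" "\<delta> < 2/3"
  shows "\<exists>(R::(nat \<Rightarrow> real) measure) A. continual_mechanism n T R A \<and> event_level_DP n T \<epsilon> \<delta> R A \<and>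
     accurate n T R A (6144 * (ln (real n + real T + 2))^3 * sqrt (real n * ln (1/\<delta>)) / \<epsilon>)"
proof -
  define D where "D = real (card (tree_levels T))"
  define u where "u = real (card (tree_nodes n T))"
  define c where "c = \<epsilon> / sqrt (8 * (128 * real n * D) * ln (2/\<delta>))"
  define N where "N = 8 + nat \<lceil>ln (8 * (u + 1) / min \<delta> \<epsilon>) / c\<rceil>"
  define a where "a = ln (6 * u + 1) / c"
  have D: "1 \<le> D" "D \<le> 4 * ln (real n + real T + 2)"
    using card_tree_levels_pos[OF T] card_tree_levels_le_ln[OF T n] by (simp_all add: D_def)
  have "1 * 1 \<le> real n * D"
    using n D(1) by (intro mult_mono) auto
  then have "128 \<le> 128 * real n * D"
    by simp
  moreover have "\<delta> < 1"
    using \<delta>(2) by simp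
  ultimately have c: "c > 0" "8 * c \<le> 1" "c^2 * (128 * real n * D) \<le> \<epsilon>/4"
    "8 * c^2 * (128 * real n * D) * ln (2/\<delta>) \<le> \<epsilon>^2"
    using laplace_parameter_bounds[OF \<epsilon> \<delta>(1)] unfolding c_def by blast+
  have u: "u \<ge> 0"
    by (simp add: u_def)
  have "event_level_DP n T \<epsilon> \<delta> (tree_randomness n T c N) (tree_mechanism n T)"
  proof (rule tree_mechanism_dp)
    show "real (card (tree_nodes n T)) * (2 * exp (-c * real (N - 8 + 1))) \<le> min (\<delta>/2) (\<epsilon>/4)"
      using exp_tail_ceiling_le[OF c(1) _ u, of "min \<delta> \<epsilon>"] \<delta> \<epsilon> by (simp add: N_def u_def)
  qed (use c \<delta> \<epsilon> in \<open>auto simp: N_def D_def\<close>)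
  moreover have "accurate n T (tree_randomness n T c N) (tree_mechanism n T)
      (6144 * (ln (real n + real T + 2))^3 * sqrt (real n * ln (1/\<delta>)) / \<epsilon>)"
  proof (rule tree_mechanism_accurate)
    show "a \<ge> 0"
      using c(1) u by (simp add: a_def)
    have "exp (-c * a) = 1 / (6 * u + 1)"
      using c(1) u by (simp add: a_def exp_minus inverse_eq_divide)
    then have "real (card (tree_nodes n T)) * (2 * exp (-c * a)) = 2 * u / (6 * u + 1)"
      by (simp add: u_def)
    also have "\<dots> \<le> 1/3"
      using u by (simp add: field_simps)
    finally show "real (card (tree_nodes n T)) * (2 * exp (-c * a)) \<le> 1/3" .
    show "real (card (tree_levels T)) * a \<le> 6144 * (ln (real n + real T + 2))^3 * sqrt (real n * ln (1/\<delta>)) / \<epsilon>"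
      using tree_error_arith[OF D, of "ln (6 * u + 1)" "ln (2/\<delta>)" "ln (1/\<delta>)" "real n" \<epsilon>]
        ln_card_tree_nodes_le[OF T n] ln_two_div_le[OF \<delta>] u \<delta> \<epsilon>
      by (simp add: a_def c_def D_def u_def)
  qed (use c in auto)
  ultimately show ?thesis
    using continual_mechanism_tree_mechanism by blast
qed

section \<open>Degenerate parameters\<close>

lemma trivial_mechanism_exists:
  assumes "n = 0 \<or> T = 0" "0 < \<delta>" "0 < \<epsilon>"
  shows "\<exists>(R::(nat \<Rightarrow> real) measure) A. continual_mechanism n T R A \<and> event_level_DP n T \<epsilon> \<delta> R A
    \<and> accurate n T R A \<alpha>"
proof (intro exI conjI)
  let ?R = "measure_pmf (return_pmf (\<lambda>_::nat. 0::real))"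
  let ?A = "\<lambda>(r::nat \<Rightarrow> real) (xs::update list) (i::nat). 0::real"
  show "continual_mechanism n T ?R ?A"
    unfolding continual_mechanism_def by (simp add: measure_pmf.prob_space_axioms)
  have "measure ?R {r \<in> space ?R. mech_output ?A r xs \<in> S}
      \<le> exp \<epsilon> * measure ?R {r \<in> space ?R. mech_output ?A r ys \<in> S} + \<delta>" for xs ys S
  proof -
    have "measure ?R {r \<in> space ?R. mech_output ?A r xs \<in> S} = measure ?R {r \<in> space ?R. mech_output ?A r ys \<in> S}"
      by (simp add: mech_output_def)
    moreover have "1 * measure ?R {r \<in> space ?R. mech_output ?A r ys \<in> S}
        \<le> exp \<epsilon> * measure ?R {r \<in> space ?R. mech_output ?A r ys \<in> S}"
      using assms(3) by (intro mult_right_mono) auto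
    ultimately show ?thesis
      using assms(2) by simp
  qed
  then show "event_level_DP n T \<epsilon> \<delta> ?R ?A"
    unfolding event_level_DP_def by blast
  show "accurate n T ?R ?A \<alpha>"
    unfolding accurate_def using assms(1) by auto
qed

text \<open>The error bound vanishes as \<delta> tends to 1. For \<delta> \<ge> 2/3 the slack \<delta> alone pays
  for releasing the exact histograms with probability 2/3 and zero otherwise.\<close>
definition exact_or_zero_mechanism :: "nat \<Rightarrow> (nat \<Rightarrow> real) \<Rightarrow> update list \<Rightarrow> nat \<Rightarrow> real" where
  "exact_or_zero_mechanism n r xs i = (if r 0 = 1 then real (deg_hist n {e. Some e \<in> set xs} i) else 0)"

definition coin_randomness :: "(nat \<Rightarrow> real) measure" where
  "coin_randomness = measure_pmf (map_pmf (\<lambda>b k. if b then 1 else 0) (bernoulli_pmf (2/3)))"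

lemma measure_coin_randomness:
  "measure coin_randomness {r \<in> space coin_randomness. P (r 0 = 1)}
    = (if P True then 2/3 else 0) + (if P False then 1/3 else 0)"
proof -
  have "{b. P b} = {b. (b \<longrightarrow> P True) \<and> (\<not> b \<longrightarrow> P False)}"
  proof (intro Collect_cong)
    show "P b = ((b \<longrightarrow> P True) \<and> (\<not> b \<longrightarrow> P False))" for b
      by (cases b) simp_all
  qed
  then have "measure coin_randomness {r \<in> space coin_randomness. P (r 0 = 1)}
      = measure (bernoulli_pmf (2/3)) {b. P b}"
    by (simp add: coin_randomness_def vimage_def)
  also have "\<dots> = (\<Sum>b\<in>{b. P b}. pmf (bernoulli_pmf (2/3)) b)"
    by (rule measure_measure_pmf_finite) simp
  also have "\<dots> = (\<Sum>b\<in>UNIV. if P b then pmf (bernoulli_pmf (2/3)) b else 0)"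
    by (subst sum.inter_filter[symmetric]) auto
  finally show ?thesis
    by (simp add: UNIV_bool)
qed

lemma exact_or_zero_mechanism_exists:
  assumes "2/3 \<le> \<delta>" "0 < \<epsilon>" "0 \<le> \<alpha>"
  shows "\<exists>(R::(nat \<Rightarrow> real) measure) A. continual_mechanism n T R A \<and> event_level_DP n T \<epsilon> \<delta> R A
    \<and> accurate n T R A \<alpha>"
proof (intro exI conjI)
  show "continual_mechanism n T coin_randomness (exact_or_zero_mechanism n)"
    unfolding continual_mechanism_def coin_randomness_def
    by (simp add: measure_pmf.prob_space_axioms)
  have output_eq: "mech_output (exact_or_zero_mechanism n) r xs
      = (if r 0 = 1 then (\<lambda>t i. real (deg_hist n (graph_at xs t) i)) else (\<lambda>t i. 0))" for r xs
    by (auto simp: mech_output_def exact_or_zero_mechanism_def graph_at_def)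
  have "measure coin_randomness {r \<in> space coin_randomness. mech_output (exact_or_zero_mechanism n) r xs \<in> S}
      \<le> exp \<epsilon> * measure coin_randomness {r \<in> space coin_randomness. mech_output (exact_or_zero_mechanism n) r ys \<in> S} + \<delta>"
    for xs ys S
  proof -
    let ?p = "\<lambda>zs. measure coin_randomness {r \<in> space coin_randomness. mech_output (exact_or_zero_mechanism n) r zs \<in> S}"
    have p: "?p zs = (if (\<lambda>t i. real (deg_hist n (graph_at zs t) i)) \<in> S then 2/3 else 0)
        + (if (\<lambda>t i. 0::real) \<in> S then 1/3 else 0)" for zs
      unfolding output_eq using measure_coin_randomness[where P = "\<lambda>b. (if b then _ else _) \<in> S"] by simp
    have "?p ys \<le> exp \<epsilon> * ?p ys"
      using assms(2) p[of ys] by simp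
    moreover have "?p xs \<le> 2/3 + ?p ys"
      unfolding p by auto
    ultimately show ?thesis
      using assms(1) by linarith
  qed
  then show "event_level_DP n T \<epsilon> \<delta> coin_randomness (exact_or_zero_mechanism n)"
    unfolding event_level_DP_def by blast
  have "measure coin_randomness {r \<in> space coin_randomness. \<forall>t\<in>{1..T}. \<forall>i<n.
      \<bar>exact_or_zero_mechanism n r (take t xs) i - real (deg_hist n (graph_at xs t) i)\<bar> \<le> \<alpha>} \<ge> 2/3" for xs
  proof -
    have "{r \<in> space coin_randomness. r 0 = 1} \<subseteq> {r \<in> space coin_randomness. \<forall>t\<in>{1..T}. \<forall>i<n.
        \<bar>exact_or_zero_mechanism n r (take t xs) i - real (deg_hist n (graph_at xs t) i)\<bar> \<le> \<alpha>}"
      using assms(3) by (auto simp: exact_or_zero_mechanism_def graph_at_def)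
    moreover have "measure coin_randomness {r \<in> space coin_randomness. r 0 = 1} = 2/3"
      using measure_coin_randomness[where P = "\<lambda>b. b"] by simp
    ultimately show "measure coin_randomness {r \<in> space coin_randomness. \<forall>t\<in>{1..T}. \<forall>i<n.
        \<bar>exact_or_zero_mechanism n r (take t xs) i - real (deg_hist n (graph_at xs t) i)\<bar> \<le> \<alpha>} \<ge> 2/3"
      by (metis (no_types, lifting) coin_randomness_def measure_pmf.finite_measure_mono sets_measure_pmf UNIV_I)
  qed
  then show "accurate n T coin_randomness (exact_or_zero_mechanism n) \<alpha>"
    unfolding accurate_def by blast
qed

theorem mainTheorem7:
  shows "\<exists>(C::real) (k::nat). \<forall>(n::nat) (T::nat) (\<epsilon>::real) (\<delta>::real).
     0 < \<epsilon> \<and> \<epsilon> < 1 \<and> 0 < \<delta> \<and> \<delta> < 1 \<longrightarrow>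
     (\<exists>(R::(nat \<Rightarrow> real) measure) A.
        continual_mechanism n T R A \<and> event_level_DP n T \<epsilon> \<delta> R A \<and>
        accurate n T R A
          (C * (ln (real n + real T + 2)) ^ k * sqrt (real n * ln (1 / \<delta>)) / \<epsilon>))"
proof -
  have "\<exists>R A. continual_mechanism n T R A \<and> event_level_DP n T \<epsilon> \<delta> R A \<and>
      accurate n T R A (6144 * (ln (real n + real T + 2)) ^ 3 * sqrt (real n * ln (1 / \<delta>)) / \<epsilon>)"
    if h: "0 < \<epsilon> \<and> \<epsilon> < 1 \<and> 0 < \<delta> \<and> \<delta> < 1" for n T :: nat and \<epsilon> \<delta> :: real
  proof -
    consider "n = 0 \<or> T = 0" | "2/3 \<le> \<delta>" | "n \<ge> 1" "T \<ge> 1" "\<delta> < 2/3"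
      by linarith
    then show ?thesis
    proof cases
      case 1
      then show ?thesis
        using h by (intro trivial_mechanism_exists) auto
    next
      case 2
      then show ?thesis
        using h by (intro exact_or_zero_mechanism_exists) auto
    next
      case 3
      then show ?thesis
        using h tree_mechanism_exists by simp
    qed
  qed
  then show ?thesis
    by blast
qed

end
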